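(* Let $B=B_G(\{p_i\mid i\in I\},\chi)$ and $\tilde B=B_{\tilde G}(\{\tilde p_i\mid i\in\tilde I\},\tilde\chi)$. Then $B\cong\tilde B$ as Hopf algebras if and only if $G=\tilde G$, $\{p_i\mid i\in I\}=\{\tilde p_i\mid i\in\tilde I\}$, and $\chi=\tilde\chi$.
   Context: $k$ is algebraically closed of characteristic zero. Data for $B_G(\{p_i\},\chi)$: $G$ a subgroup of $(\mathbb{Q},+)$ containing $\mathbb{Z}$, written $\{x^a:a\in G\}$ with $x^ax^{a'}=x^{a+a'}$; an index set $I$ with $|I|\ge2$; pairwise relatively prime integers $p_i\ge2$ ($i\in I$) with $1/p_i\in G$; $GM=\sum_iG(1/p_i)\subseteq\mathbb{Q}$; $\chi:GM\to k^\times$ a group homomorphism with $\chi(1/p_i^2)$ a primitive $p_i$-th root of unity for all $i$. $B_G(\{p_i\},\chi)$ is the algebra generated by $x^a$ ($a\in G$) and $y_i$ ($i\in I$) with relations $x^0=1$, $x^ax^{a'}=x^{a+a'}$, $x^ay_i=\chi(a/p_i)y_ix^a$, $y_iy_j=y_jy_i$, $y_i^{p_i}=y_j^{p_j}$, with Hopf structure $x^a$ grouplike, $\Delta(y_i)=y_i\otimes1+x^{1/p_i}\otimes y_i$, $\epsilon(y_i)=0$, $S(y_i)=-x^{-1/p_i}y_i$. Same for $\tilde B$ with the tilde data. *)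

theory Defs
  imports "HOL-Library.Poly_Mapping" "HOL-Computational_Algebra.Polynomial"
begin

definition alg_closed :: "'k::field itself \<Rightarrow> bool" where
  "alg_closed TYPE('k) \<longleftrightarrow> (\<forall>q::'k poly. degree q > 0 \<longrightarrow> (\<exists>x. poly q x = 0))"

definition GM :: "rat set \<Rightarrow> 'i set \<Rightarrow> ('i \<Rightarrow> nat) \<Rightarrow> rat set" where
  "GM G I p = {(\<Sum>i\<in>F. g i / of_nat (p i)) | F g. finite F \<and> F \<subseteq> I \<and> (\<forall>i\<in>F. g i \<in> G)}"

definition primitive_root :: "'k::field \<Rightarrow> nat \<Rightarrow> bool" where
  "primitive_root z n \<longleftrightarrow> z ^ n = 1 \<and> (\<forall>m. 0 < m \<and> m < n \<longrightarrow> z ^ m \<noteq> 1)"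

definition B_data :: "rat set \<Rightarrow> 'i set \<Rightarrow> ('i \<Rightarrow> nat) \<Rightarrow> (rat \<Rightarrow> 'k::field) \<Rightarrow> bool" where
  "B_data G I p \<chi> \<longleftrightarrow>
     \<comment> \<open>G a subgroup of (Q,+) containing Z\<close>
     (\<forall>a\<in>G. \<forall>b\<in>G. a + b \<in> G) \<and> (\<forall>a\<in>G. - a \<in> G) \<and> (\<forall>n::int. of_int n \<in> G) \<and>
     \<comment> \<open>|I| >= 2\<close>
     (\<exists>i\<in>I. \<exists>j\<in>I. i \<noteq> j) \<and>
     \<comment> \<open>pairwise relatively prime integers p_i >= 2 with 1/p_i in G\<close>
     (\<forall>i\<in>I. p i \<ge> 2) \<and> (\<forall>i\<in>I. \<forall>j\<in>I. i \<noteq> j \<longrightarrow> coprime (p i) (p j)) \<and>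
     (\<forall>i\<in>I. 1 / of_nat (p i) \<in> G) \<and>
     \<comment> \<open>chi : GM -> k^x a group homomorphism\<close>
     (\<forall>q\<in>GM G I p. \<chi> q \<noteq> 0) \<and>
     (\<forall>q\<in>GM G I p. \<forall>q'\<in>GM G I p. \<chi> (q + q') = \<chi> q * \<chi> q') \<and>
     \<comment> \<open>chi(1/p_i^2) a primitive p_i-th root of unity\<close>
     (\<forall>i\<in>I. primitive_root (\<chi> (1 / of_nat (p i) ^ 2)) (p i))"

datatype 'i gen = GX rat | GY 'i

type_synonym ('i, 'k) fa = "'i gen list \<Rightarrow>\<^sub>0 'k"
type_synonym ('i, 'k) ft = "('i gen list \<times> 'i gen list) \<Rightarrow>\<^sub>0 'k"

definition fa_mult :: "('i, 'k::comm_ring_1) fa \<Rightarrow> ('i, 'k) fa \<Rightarrow> ('i, 'k) fa" where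
  "fa_mult f g = (\<Sum>u\<in>Poly_Mapping.keys f. \<Sum>v\<in>Poly_Mapping.keys g. Poly_Mapping.single (u @ v) (Poly_Mapping.lookup f u * Poly_Mapping.lookup g v))"

definition fa_one :: "('i, 'k::comm_ring_1) fa" where
  "fa_one = Poly_Mapping.single [] 1"

definition fa_smult :: "'k::comm_ring_1 \<Rightarrow> ('i, 'k) fa \<Rightarrow> ('i, 'k) fa" where
  "fa_smult c f = fa_mult (Poly_Mapping.single [] c) f"

definition fa_X :: "rat \<Rightarrow> ('i, 'k::comm_ring_1) fa" where
  "fa_X a = Poly_Mapping.single [GX a] 1"

definition fa_Y :: "'i \<Rightarrow> ('i, 'k::comm_ring_1) fa" where
  "fa_Y i = Poly_Mapping.single [GY i] 1"

inductive_set fa_ideal :: "('i, 'k::comm_ring_1) fa set \<Rightarrow> ('i, 'k) fa set" for S where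
  gen: "s \<in> S \<Longrightarrow> s \<in> fa_ideal S"
| zero: "0 \<in> fa_ideal S"
| add: "a \<in> fa_ideal S \<Longrightarrow> b \<in> fa_ideal S \<Longrightarrow> a + b \<in> fa_ideal S"
| mult: "a \<in> fa_ideal S \<Longrightarrow> fa_mult (fa_mult u a) v \<in> fa_ideal S"

text \<open>Defining relations of B_G({p_i},chi).  Generators GX a with a not in G and GY i with
  i not in I are not generators of B; they are killed (set to 0).\<close>
definition B_rels :: "rat set \<Rightarrow> 'i set \<Rightarrow> ('i \<Rightarrow> nat) \<Rightarrow> (rat \<Rightarrow> 'k::comm_ring_1) \<Rightarrow> ('i, 'k) fa set" where
  "B_rels G I p \<chi> =
     {fa_X 0 - fa_one}
   \<union> {fa_mult (fa_X a) (fa_X a') - fa_X (a + a') | a a'. a \<in> G \<and> a' \<in> G}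
   \<union> {fa_mult (fa_X a) (fa_Y i) - fa_smult (\<chi> (a / of_nat (p i))) (fa_mult (fa_Y i) (fa_X a)) | a i. a \<in> G \<and> i \<in> I}
   \<union> {fa_mult (fa_Y i) (fa_Y j) - fa_mult (fa_Y j) (fa_Y i) | i j. i \<in> I \<and> j \<in> I}
   \<union> {Poly_Mapping.single (replicate (p i) (GY i)) 1 - Poly_Mapping.single (replicate (p j) (GY j)) 1 | i j. i \<in> I \<and> j \<in> I}
   \<union> {fa_X a | a. a \<notin> G}
   \<union> {fa_Y i | i. i \<notin> I}"

definition B_ideal :: "rat set \<Rightarrow> 'i set \<Rightarrow> ('i \<Rightarrow> nat) \<Rightarrow> (rat \<Rightarrow> 'k::comm_ring_1) \<Rightarrow> ('i, 'k) fa set" where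
  "B_ideal G I p \<chi> = fa_ideal (B_rels G I p \<chi>)"

definition ft_mult :: "('i, 'k::comm_ring_1) ft \<Rightarrow> ('i, 'k) ft \<Rightarrow> ('i, 'k) ft" where
  "ft_mult f g = (\<Sum>uv\<in>Poly_Mapping.keys f. \<Sum>uv'\<in>Poly_Mapping.keys g.
      Poly_Mapping.single (fst uv @ fst uv', snd uv @ snd uv') (Poly_Mapping.lookup f uv * Poly_Mapping.lookup g uv'))"

definition ft_smult :: "'k::comm_ring_1 \<Rightarrow> ('i, 'k) ft \<Rightarrow> ('i, 'k) ft" where
  "ft_smult c h = ft_mult (Poly_Mapping.single ([], []) c) h"

definition ft_tensor :: "('i, 'k::comm_ring_1) fa \<Rightarrow> ('i, 'k) fa \<Rightarrow> ('i, 'k) ft" where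
  "ft_tensor f g = (\<Sum>u\<in>Poly_Mapping.keys f. \<Sum>v\<in>Poly_Mapping.keys g. Poly_Mapping.single (u, v) (Poly_Mapping.lookup f u * Poly_Mapping.lookup g v))"

text \<open>R (x) F + F (x) R: kernel of F (x) F -> (F/R) (x) (F/R).\<close>
inductive_set ft_ideal :: "('i, 'k::comm_ring_1) fa set \<Rightarrow> ('i, 'k) ft set" for R where
  zero: "0 \<in> ft_ideal R"
| left: "r \<in> R \<Longrightarrow> ft_tensor r f \<in> ft_ideal R"
| right: "r \<in> R \<Longrightarrow> ft_tensor f r \<in> ft_ideal R"
| add: "a \<in> ft_ideal R \<Longrightarrow> b \<in> ft_ideal R \<Longrightarrow> a + b \<in> ft_ideal R"

fun delta_gen :: "('i \<Rightarrow> nat) \<Rightarrow> 'i gen \<Rightarrow> ('i, 'k::comm_ring_1) ft" where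
  "delta_gen p (GX a) = Poly_Mapping.single ([GX a], [GX a]) 1"
| "delta_gen p (GY i) = Poly_Mapping.single ([GY i], []) 1
                        + Poly_Mapping.single ([GX (1 / of_nat (p i))], [GY i]) 1"

fun delta_word :: "('i \<Rightarrow> nat) \<Rightarrow> 'i gen list \<Rightarrow> ('i, 'k::comm_ring_1) ft" where
  "delta_word p [] = Poly_Mapping.single ([], []) 1"
| "delta_word p (g # w) = ft_mult (delta_gen p g) (delta_word p w)"

definition B_Delta :: "('i \<Rightarrow> nat) \<Rightarrow> ('i, 'k::comm_ring_1) fa \<Rightarrow> ('i, 'k) ft" where
  "B_Delta p f = (\<Sum>w\<in>Poly_Mapping.keys f. ft_smult (Poly_Mapping.lookup f w) (delta_word p w))"

fun eps_gen :: "rat set \<Rightarrow> 'i gen \<Rightarrow> 'k::comm_ring_1" where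
  "eps_gen G (GX a) = (if a \<in> G then 1 else 0)"
| "eps_gen G (GY i) = 0"

definition B_eps :: "rat set \<Rightarrow> ('i, 'k::comm_ring_1) fa \<Rightarrow> 'k" where
  "B_eps G f = (\<Sum>w\<in>Poly_Mapping.keys f. Poly_Mapping.lookup f w * prod_list (map (eps_gen G) w))"

fun S_gen :: "('i \<Rightarrow> nat) \<Rightarrow> 'i gen \<Rightarrow> ('i, 'k::comm_ring_1) fa" where
  "S_gen p (GX a) = fa_X (- a)"
| "S_gen p (GY i) = - fa_mult (fa_X (- (1 / of_nat (p i)))) (fa_Y i)"

fun S_word :: "('i \<Rightarrow> nat) \<Rightarrow> 'i gen list \<Rightarrow> ('i, 'k::comm_ring_1) fa" where
  "S_word p [] = fa_one"
| "S_word p (g # w) = fa_mult (S_word p w) (S_gen p g)"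

definition B_S :: "('i \<Rightarrow> nat) \<Rightarrow> ('i, 'k::comm_ring_1) fa \<Rightarrow> ('i, 'k) fa" where
  "B_S p f = (\<Sum>w\<in>Poly_Mapping.keys f. fa_smult (Poly_Mapping.lookup f w) (S_word p w))"

section \<open>Hopf algebra isomorphisms B -> B~, given by a linear lift F -> F~\<close>

definition ft_map :: "(('i, 'k::comm_ring_1) fa \<Rightarrow> ('j, 'k) fa) \<Rightarrow> ('i, 'k) ft \<Rightarrow> ('j, 'k) ft" where
  "ft_map \<phi> h = (\<Sum>uv\<in>Poly_Mapping.keys h. ft_smult (Poly_Mapping.lookup h uv)
       (ft_tensor (\<phi> (Poly_Mapping.single (fst uv) 1)) (\<phi> (Poly_Mapping.single (snd uv) 1))))"

definition hopf_iso_B ::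
  "rat set \<Rightarrow> 'i set \<Rightarrow> ('i \<Rightarrow> nat) \<Rightarrow> (rat \<Rightarrow> 'k::field) \<Rightarrow>
   rat set \<Rightarrow> 'j set \<Rightarrow> ('j \<Rightarrow> nat) \<Rightarrow> (rat \<Rightarrow> 'k) \<Rightarrow>
   (('i, 'k) fa \<Rightarrow> ('j, 'k) fa) \<Rightarrow> bool" where
  "hopf_iso_B G I p \<chi> G' I' p' \<chi>' \<phi> \<longleftrightarrow>
     (let R = B_ideal G I p \<chi>; R' = B_ideal G' I' p' \<chi>' in
       \<comment> \<open>k-linear\<close>
       (\<forall>f g. \<phi> (f + g) = \<phi> f + \<phi> g) \<and> (\<forall>c f. \<phi> (fa_smult c f) = fa_smult c (\<phi> f)) \<and>
       \<comment> \<open>well defined and injective on the quotient\<close>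
       (\<forall>f. f \<in> R \<longleftrightarrow> \<phi> f \<in> R') \<and>
       \<comment> \<open>surjective on the quotient\<close>
       (\<forall>g. \<exists>f. g - \<phi> f \<in> R') \<and>
       \<comment> \<open>algebra map\<close>
       (\<forall>f g. \<phi> (fa_mult f g) - fa_mult (\<phi> f) (\<phi> g) \<in> R') \<and>
       \<phi> fa_one - fa_one \<in> R' \<and>
       \<comment> \<open>coalgebra map\<close>
       (\<forall>f. ft_map \<phi> (B_Delta p f) - B_Delta p' (\<phi> f) \<in> ft_ideal R') \<and>
       (\<forall>f. B_eps G' (\<phi> f) = B_eps G f) \<and>
       \<comment> \<open>compatible with antipodes\<close>
       (\<forall>f. \<phi> (B_S p f) - B_S p' (\<phi> f) \<in> R'))"

end

theory Submission
  imports Defs "HOL-Library.Product_Plus"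
begin

text \<open>
  If the data agree, relabelling each \<open>y\<^sub>i\<close> as the \<open>y'\<^sub>j\<close> with \<open>p'\<^sub>j = p\<^sub>i\<close> is a Hopf
  isomorphism. For the converse, elements are tested against the algebra maps
  \<open>\<rho>\<^sub>j\<close> from \<open>B\<close> to upper triangular \<open>2 \<times> 2\<close> matrices over the group algebra \<open>k[\<rat>]\<close> that
  send \<open>x\<^sup>a\<close> to \<open>diag([a], \<chi>(a/p\<^sub>j)\<^sup>-\<^sup>1[a])\<close> and \<open>y\<^sub>i\<close> to \<open>\<delta>\<^sub>i\<^sub>j E\<^sub>1\<^sub>2\<close>. Through the diagonal
  entry, a Hopf isomorphism \<open>\<phi>\<close> maps each grouplike \<open>x\<^sup>a\<close> to some \<open>x\<^bsup>f(a)\<^esup>\<close> with \<open>f\<close>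
  additive, so \<open>f(a) = a f(1)\<close>. Through the off-diagonal entry, \<open>\<phi>(y\<^sub>i)\<close> has a
  nonzero \<open>y'\<^sub>j\<close>-component only if \<open>f(1/p\<^sub>i) = 1/p'\<^sub>j\<close>, and each \<open>y'\<^sub>j\<close> resp. \<open>y\<^sub>i\<close> occurs
  in this way, because modulo the relations and the words with two \<open>y\<close>'s every
  element is a combination of the \<open>x\<^sup>b\<close> and \<open>x\<^sup>b y\<^sub>j\<close>. Two such pairs with pairwise coprime
  \<open>p\<close>'s force \<open>f(1) = 1\<close>; hence \<open>G = G'\<close>, the \<open>p\<close>'s agree, and applying the \<open>y'\<^sub>j\<close>-entry to
  the image of \<open>x\<^sup>a y\<^sub>i = \<chi>(a/p\<^sub>i) y\<^sub>i x\<^sup>a\<close> gives \<open>\<chi> = \<chi>'\<close>.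
\<close>

abbreviation single :: "'a \<Rightarrow> 'b \<Rightarrow> 'a \<Rightarrow>\<^sub>0 'b::zero" where "single \<equiv> Poly_Mapping.single"
abbreviation lookup :: "('a \<Rightarrow>\<^sub>0 'b::zero) \<Rightarrow> 'a \<Rightarrow> 'b" where "lookup \<equiv> Poly_Mapping.lookup"
abbreviation keys :: "('a \<Rightarrow>\<^sub>0 'b::zero) \<Rightarrow> 'a set" where "keys \<equiv> Poly_Mapping.keys"

text \<open>Words form a monoid under concatenation, so the free algebra \<open>('i gen list \<Rightarrow>\<^sub>0 'k)\<close> is a
  monoid algebra and \<open>fa_mult\<close> is its product.\<close>

instantiation list :: (type) monoid_add
begin
definition zero_list :: "'a list" where "zero_list = []"
definition plus_list :: "'a list \<Rightarrow> 'a list \<Rightarrow> 'a list" where "plus_list xs ys = xs @ ys"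
instance by standard (auto simp: zero_list_def plus_list_def)
end

lemma list_plus_eq [simp]: "(xs::'a list) + ys = xs @ ys" by (simp add: plus_list_def)

lemma single_Nil [simp]: "single [] c = single 0 c"
  by (simp add: zero_list_def)
lemma single_NilNil [simp]: "single ([],[]) c = single 0 c"
  by (simp add: zero_list_def zero_prod_def)

lemma zero_list_append [simp]: "(0::'a list) @ xs = xs" by (simp add: zero_list_def)
lemma append_zero_list [simp]: "xs @ (0::'a list) = xs" by (simp add: zero_list_def)
lemma zero_list_Cons [simp]: "(0::'a list) \<noteq> x # xs" "x # xs \<noteq> (0::'a list)" by (simp_all add: zero_list_def)

lemma poly_mapping_sum_single:
  "f = (\<Sum>w\<in>keys f. single w (lookup f w))"
proof -
  have *: "finite S \<Longrightarrow> lookup (\<Sum>w\<in>S. single w (lookup f w)) x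
        = (if x \<in> S then lookup f x else 0)" for S x
    by (induction S rule: finite_induct) (auto simp: lookup_single lookup_add when_def)
  show ?thesis
    by (rule poly_mapping_eqI) (auto simp: * in_keys_iff)
qed

lemma poly_mapping_induct [case_names zero single_add]:
  fixes f :: "'a \<Rightarrow>\<^sub>0 'b::comm_monoid_add"
  assumes z: "P 0" and s: "\<And>w c f. P f \<Longrightarrow> P (single w c + f)"
  shows "P f"
proof -
  have "P (\<Sum>w\<in>S. single w (lookup f w))" if "finite S" for S
    using that by (induction S rule: finite_induct) (auto simp: z s)
  then show ?thesis by (subst poly_mapping_sum_single) simp
qed

definition lin_ext :: "('w \<Rightarrow> ('x::monoid_add \<Rightarrow>\<^sub>0 'k::comm_ring_1)) \<Rightarrow> ('w \<Rightarrow>\<^sub>0 'k) \<Rightarrow> ('x \<Rightarrow>\<^sub>0 'k)" where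
  "lin_ext P f = (\<Sum>w\<in>keys f. single 0 (lookup f w) * P w)"

lemma lin_ext_zero [simp]: "lin_ext P 0 = 0"
  by (simp add: lin_ext_def)

lemma lin_ext_single [simp]: "lin_ext P (single w c) = single 0 c * P w"
  by (cases "c = 0") (simp_all add: lin_ext_def)

lemma lin_ext_add: "lin_ext P (f + g) = lin_ext P f + lin_ext P g"
proof -
  let ?K = "keys f \<union> keys g"
  have e: "lin_ext P h = (\<Sum>w\<in>?K. single 0 (lookup h w) * P w)"
    if "keys h \<subseteq> ?K" for h
    unfolding lin_ext_def
    by (rule sum.mono_neutral_left) (use that in \<open>auto simp: in_keys_iff\<close>)
  have "lin_ext P (f + g) = (\<Sum>w\<in>?K. single 0 (lookup (f+g) w) * P w)"
    by (rule e) (auto simp: in_keys_iff lookup_add)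
  also have "\<dots> = (\<Sum>w\<in>?K. single 0 (lookup f w) * P w
                          + single 0 (lookup g w) * P w)"
    by (simp add: lookup_add single_add distrib_right)
  also have "\<dots> = lin_ext P f + lin_ext P g"
    by (simp add: sum.distrib e)
  finally show ?thesis .
qed

lemma lin_ext_sum: "lin_ext P (\<Sum>i\<in>S. g i) = (\<Sum>i\<in>S. lin_ext P (g i))"
  by (induction S rule: infinite_finite_induct) (auto simp: lin_ext_add)

lemma lin_ext_uminus: "lin_ext P (- f) = - lin_ext P f"
  using lin_ext_add[of P f "-f"] by (simp add: eq_neg_iff_add_eq_0 add.commute)

lemma lin_ext_diff: "lin_ext P (f - g) = lin_ext P f - lin_ext P g"
  using lin_ext_add[of P f "-g"] by (simp add: lin_ext_uminus)

lemma single_zero_commute: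
  fixes x :: "'x::monoid_add \<Rightarrow>\<^sub>0 'k::comm_ring_1"
  shows "single 0 c * x = x * single 0 c"
proof (induction x rule: poly_mapping_induct)
  case zero then show ?case by simp
next
  case (single_add w a f)
  then show ?case by (simp add: distrib_left distrib_right mult_single mult.commute)
qed

lemma single_zero_mult: "single (0::'x::monoid_add) a * single 0 (b::'k::comm_ring_1)
   = single 0 (a*b)"
  by (simp add: mult_single)

lemma single_zero_mult_mult:
  fixes X Y :: "'x::monoid_add \<Rightarrow>\<^sub>0 'k::comm_ring_1"
  shows "single 0 a * X * (single 0 b * Y)
       = single 0 (a * b) * (X * Y)"
proof -
  have "single 0 a * X * (single 0 b * Y)
      = single 0 a * (X * single 0 b) * Y" by (simp add: mult.assoc)
  also have "\<dots> = single 0 a * (single 0 b * X) * Y"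
    by (simp add: single_zero_commute)
  finally show ?thesis by (simp add: mult.assoc single_zero_mult[symmetric])
qed

lemma lin_ext_scale:
  fixes f :: "'w::monoid_add \<Rightarrow>\<^sub>0 'k::comm_ring_1"
  shows "lin_ext P (single 0 c * f) = single 0 c * lin_ext P f"
proof (induction f rule: poly_mapping_induct)
  case zero then show ?case by simp
next
  case (single_add w a f)
  then show ?case
    by (simp add: distrib_left lin_ext_add mult_single mult.assoc[symmetric] single_zero_mult)
qed

lemma lin_ext_mult:
  fixes f g :: "'w::monoid_add \<Rightarrow>\<^sub>0 'k::comm_ring_1"
  assumes P: "\<And>u v. P (u + v) = P u * P v"
  shows "lin_ext P (f * g) = lin_ext P f * lin_ext P g"
proof (induction f rule: poly_mapping_induct)
  case zero then show ?case by simp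
next
  case (single_add u a f)
  have "lin_ext P (single u a * g) = lin_ext P (single u a) * lin_ext P g"
  proof (induction g rule: poly_mapping_induct)
    case zero then show ?case by simp
  next
    case (single_add v b g)
    have "single 0 (a * b) * P (u + v)
       = single 0 a * P u * (single 0 b * P v)"
      by (simp add: P single_zero_mult_mult)
    with single_add show ?case
      by (simp add: distrib_left lin_ext_add mult_single)
  qed
  with single_add show ?case by (simp add: distrib_right lin_ext_add)
qed

lemma lin_ext_mult_derivation:
  fixes f g :: "'w::monoid_add \<Rightarrow>\<^sub>0 'k::comm_ring_1"
  assumes P: "\<And>u v. P (u + v) = P1 u * P2 v + P3 u * P4 v"
  shows "lin_ext P (f * g) = lin_ext P1 f * lin_ext P2 g + lin_ext P3 f * lin_ext P4 g"
proof (induction f rule: poly_mapping_induct)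
  case zero then show ?case by simp
next
  case (single_add u a f)
  have "lin_ext P (single u a * g) = lin_ext P1 (single u a) * lin_ext P2 g
           + lin_ext P3 (single u a) * lin_ext P4 g"
  proof (induction g rule: poly_mapping_induct)
    case zero then show ?case by simp
  next
    case (single_add v b g)
    have "single 0 (a * b) * P (u + v)
       = single 0 a * P1 u * (single 0 b * P2 v)
       + single 0 a * P3 u * (single 0 b * P4 v)"
      by (simp add: P single_zero_mult_mult distrib_left)
    with single_add show ?case
      by (simp add: distrib_left lin_ext_add mult_single algebra_simps)
  qed
  with single_add show ?case by (simp add: distrib_right lin_ext_add algebra_simps)
qed

lemma lin_ext_antimult:
  fixes f g :: "'w::monoid_add \<Rightarrow>\<^sub>0 'k::comm_ring_1"
  assumes P: "\<And>u v. P (u + v) = P v * P u"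
  shows "lin_ext P (f * g) = lin_ext P g * lin_ext P f"
proof (induction f rule: poly_mapping_induct)
  case zero then show ?case by simp
next
  case (single_add u a f)
  have "lin_ext P (single u a * g) = lin_ext P g * lin_ext P (single u a)"
  proof (induction g rule: poly_mapping_induct)
    case zero then show ?case by simp
  next
    case (single_add v b g)
    have "single 0 (a * b) * P (u + v)
       = single 0 b * P v * (single 0 a * P u)"
      by (simp add: P single_zero_mult_mult mult.commute[of a b])
    with single_add show ?case
      by (simp add: distrib_left distrib_right lin_ext_add mult_single)
  qed
  with single_add show ?case by (simp add: distrib_right distrib_left lin_ext_add)
qed

lemma lin_ext_cong: "(\<And>w. w \<in> keys f \<Longrightarrow> P w = Q w) \<Longrightarrow> lin_ext P f = lin_ext Q f"
  by (simp add: lin_ext_def)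

lemma lin_ext_compose:
  fixes f :: "'w \<Rightarrow>\<^sub>0 'k::comm_ring_1"
  shows "lin_ext Q (lin_ext P f) = lin_ext (\<lambda>w. lin_ext Q (P w)) f"
proof (induction f rule: poly_mapping_induct)
  case zero then show ?case by simp
next
  case (single_add w c f)
  then show ?case by (simp add: lin_ext_add lin_ext_scale)
qed

lemma lin_ext_single_id: "lin_ext (\<lambda>w. single w 1) f = f"
proof (induction f rule: poly_mapping_induct)
  case zero then show ?case by simp
next
  case (single_add w c f)
  then show ?case by (simp add: lin_ext_add mult_single)
qed

lemma lookup_single_zero_mult: "lookup (single 0 c * (y :: 'x::monoid_add \<Rightarrow>\<^sub>0 'k::comm_ring_1)) x = c * lookup y x"
proof (induction y rule: poly_mapping_induct)
  case zero then show ?case by simp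
next
  case (single_add w a f)
  then show ?case by (simp add: distrib_left lookup_add mult_single lookup_single when_def)
qed

lemma lookup_lin_ext: "lookup (lin_ext Q \<nu>) x = (\<Sum>w\<in>keys \<nu>. lookup \<nu> w * lookup (Q w) x)"
  by (simp add: lin_ext_def lookup_sum lookup_single_zero_mult)

lemma lin_ext_mult_left:
  fixes x :: "'x::monoid_add \<Rightarrow>\<^sub>0 'k::comm_ring_1"
  shows "x * lin_ext P f = lin_ext (\<lambda>w. x * P w) f"
proof -
  have e: "x * (single 0 c * y) = single 0 c * (x * y)" for c y
    by (simp only: mult.assoc[symmetric] single_zero_commute[of c x])
  show ?thesis by (simp add: lin_ext_def sum_distrib_left e)
qed

lemma lin_ext_mult_right: "lin_ext (\<lambda>w. P w * c) f = lin_ext P f * c"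
  by (simp add: lin_ext_def sum_distrib_right mult.assoc)

lemma sum_lookup_indicator:
  fixes \<nu> :: "'w \<Rightarrow>\<^sub>0 'k::comm_ring_1"
  shows "(\<Sum>w\<in>keys \<nu>. lookup \<nu> w * (if w = z then 1 else 0)) = lookup \<nu> z"
proof -
  have "(\<Sum>w\<in>keys \<nu>. lookup \<nu> w * (if w = z then 1 else 0)) = (\<Sum>w\<in>keys \<nu>. if w = z then lookup \<nu> w else 0)"
    by (rule sum.cong) auto
  also have "\<dots> = lookup \<nu> z" by (simp add: sum.delta' in_keys_iff)
  finally show ?thesis .
qed

lemma lin_ext_zero_fun: "(\<And>w. w \<in> keys f \<Longrightarrow> P w = 0) \<Longrightarrow> lin_ext P f = 0"
  by (simp add: lin_ext_def)

lemma lin_ext_diff_fun: "lin_ext P f - lin_ext Q f = lin_ext (\<lambda>w. P w - Q w) f"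
  by (simp add: lin_ext_def sum_subtractf[symmetric] right_diff_distrib)

lemma keys_lin_ext_subset: "(\<And>w. w \<in> keys f \<Longrightarrow> keys (P w) \<subseteq> S) \<Longrightarrow> keys (lin_ext P f) \<subseteq> S"
proof -
  assume h: "\<And>w. w \<in> keys f \<Longrightarrow> keys (P w) \<subseteq> S"
  have "keys (lin_ext P f) \<subseteq> (\<Union>w\<in>keys f. keys (single 0 (lookup f w) * P w))"
    unfolding lin_ext_def by (rule keys_sum)
  also have "\<dots> \<subseteq> S"
  proof (intro UN_least)
    fix w assume w: "w \<in> keys f"
    show "keys (single 0 (lookup f w) * P w) \<subseteq> S"
      by (rule order_trans[OF keys_mult]) (use h[OF w] in auto)
  qed
  finally show ?thesis .
qed

lemma poly_mapping_times_sum: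
  fixes f g :: "'w::monoid_add \<Rightarrow>\<^sub>0 'k::comm_ring_1"
  shows "f * g = (\<Sum>u\<in>keys f. \<Sum>v\<in>keys g. single (u + v) (lookup f u * lookup g v))"
proof -
  have "f * g = (\<Sum>u\<in>keys f. single u (lookup f u)) * (\<Sum>v\<in>keys g. single v (lookup g v))"
    using poly_mapping_sum_single[of f] poly_mapping_sum_single[of g] by simp
  also have "\<dots> = (\<Sum>u\<in>keys f. \<Sum>v\<in>keys g. single u (lookup f u) * single v (lookup g v))"
    by (simp add: sum_product)
  finally show ?thesis by (simp add: mult_single)
qed

lemma fa_mult_eq [simp]: "fa_mult f g = f * g"
  unfolding fa_mult_def by (simp add: poly_mapping_times_sum)

lemma fa_one_eq [simp]: "fa_one = 1"
  by (simp add: fa_one_def)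

lemma fa_smult_eq [simp]: "fa_smult c f = single 0 c * f"
  by (simp add: fa_smult_def)

lemma single_one_inj: "single a (1::'k::comm_ring_1) = single b 1 \<Longrightarrow> a = b"
  by (metis lookup_single_eq lookup_single_not_eq zero_neq_one)

lemma single_Cons_mult: "single (g # w) (1::'k::comm_ring_1) = single [g] 1 * single w 1"
  by (simp add: mult_single)

lemma ft_mult_eq [simp]: "ft_mult f g = f * g"
  unfolding ft_mult_def by (simp add: poly_mapping_times_sum plus_prod_def)

lemma ft_smult_eq [simp]: "ft_smult c f = single 0 c * f"
  by (simp add: ft_smult_def zero_prod_def)

definition tensor_left :: "('i,'k::comm_ring_1) fa \<Rightarrow> ('i,'k) ft" where
  "tensor_left = lin_ext (\<lambda>u. single (u, []) 1)"
definition tensor_right :: "('i,'k::comm_ring_1) fa \<Rightarrow> ('i,'k) ft" where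
  "tensor_right = lin_ext (\<lambda>v. single ([], v) 1)"

lemma ft_tensor_eq: "ft_tensor f g = tensor_left f * tensor_right g"
proof -
  have "tensor_left f * tensor_right g = (\<Sum>u\<in>keys f. \<Sum>v\<in>keys g. single 0 (lookup f u) * single (u,[]) 1 * (single 0 (lookup g v) * single ([],v) 1))"
    by (simp add: tensor_left_def tensor_right_def lin_ext_def sum_product)
  also have "\<dots> = ft_tensor f g"
    unfolding ft_tensor_def by (simp add: single_zero_mult_mult mult_single)
  finally show ?thesis by simp
qed

lemma delta_word_append: "delta_word p (u @ v) = delta_word p u * delta_word p v"
  by (induction u) (simp_all add: mult.assoc)

lemma B_Delta_eq: "B_Delta p = lin_ext (delta_word p)"
  by (simp add: fun_eq_iff B_Delta_def lin_ext_def)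

lemma B_Delta_mult: "B_Delta p (f * g) = B_Delta p f * B_Delta p g"
  by (simp add: B_Delta_eq lin_ext_mult delta_word_append)

lemma B_Delta_X: "B_Delta p (single [GX a] 1 :: ('i,'k::comm_ring_1) fa) = single ([GX a], [GX a]) 1"
  by (simp add: B_Delta_eq)

lemma B_Delta_Y: "B_Delta p (single [GY i] 1 :: ('i,'k::comm_ring_1) fa)
   = single ([GY i], []) 1 + single ([GX (1 / of_nat (p i))], [GY i]) 1"
  by (simp add: B_Delta_eq)

lemma S_word_append: "S_word p (u @ v) = S_word p v * S_word p u"
  by (induction u) (simp_all add: mult.assoc)

lemma B_S_eq: "B_S p = lin_ext (S_word p)"
  by (simp add: fun_eq_iff B_S_def lin_ext_def)

lemma B_S_antimult: "B_S p (x * y) = B_S p y * B_S p x"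
  unfolding B_S_eq by (rule lin_ext_antimult) (simp add: S_word_append)

lemma ft_map_eq: "ft_map \<phi> = lin_ext (\<lambda>uv. ft_tensor (\<phi> (single (fst uv) 1)) (\<phi> (single (snd uv) 1)))"
  by (simp add: fun_eq_iff ft_map_def lin_ext_def)

lemma ft_map_single: "ft_map \<phi> (single (u, v) c) = single 0 c * ft_tensor (\<phi> (single u 1)) (\<phi> (single v 1))"
  by (simp add: ft_map_eq)

lemma ft_map_add: "ft_map \<phi> (x + y) = ft_map \<phi> x + ft_map \<phi> y"
  by (simp add: ft_map_eq lin_ext_add)

lemma ft_tensor_single: "ft_tensor (single u a) (single v b) = single (u, v) (a * b)"
  by (cases "a = 0"; cases "b = 0") (simp_all add: ft_tensor_def)

lemma ft_tensor_zero: "ft_tensor 0 x = 0" "ft_tensor x 0 = 0"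
  by (simp_all add: ft_tensor_def)

lemma ft_tensor_one: "ft_tensor (1::('i,'k::comm_ring_1) fa) 1 = 1"
proof -
  have "ft_tensor (single 0 1 :: ('i,'k) fa) (single 0 1) = single (0, 0) 1" by (simp only: ft_tensor_single) simp
  also have "\<dots> = 1" by (metis single_one zero_prod_def)
  finally show ?thesis by simp
qed

lemma ft_tensor_one_right: "ft_tensor (single u a) (1::('i,'k::comm_ring_1) fa) = single (u, []) a"
proof -
  have "ft_tensor (single u a) (single [] 1 :: ('i,'k) fa) = single (u, []) a" by (simp only: ft_tensor_single) simp
  then show ?thesis by simp
qed

lemma tensor_left_mult: "tensor_left (x * y) = tensor_left x * tensor_left y"
  unfolding tensor_left_def by (rule lin_ext_mult) (simp add: mult_single)

lemma tensor_right_mult: "tensor_right (x * y) = tensor_right x * tensor_right y"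
  unfolding tensor_right_def by (rule lin_ext_mult) (simp add: mult_single)

lemma tensor_left_add: "tensor_left (x + y) = tensor_left x + tensor_left y" by (simp add: tensor_left_def lin_ext_add)

lemma tensor_right_add: "tensor_right (x + y) = tensor_right x + tensor_right y" by (simp add: tensor_right_def lin_ext_add)

lemma tensor_left_zero: "tensor_left 0 = 0" by (simp add: tensor_left_def)

lemma tensor_right_zero: "tensor_right 0 = 0" by (simp add: tensor_right_def)

lemma tensor_left_right_commute: "tensor_left x * tensor_right y = tensor_right y * tensor_left x"
proof (induction x rule: poly_mapping_induct)
  case zero then show ?case by (simp add: tensor_left_zero)
next
  case (single_add u a x)
  have "tensor_left (single u a) * tensor_right y = tensor_right y * tensor_left (single u a)"
  proof (induction y rule: poly_mapping_induct)
    case zero then show ?case by (simp add: tensor_right_zero)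
  next
    case (single_add v b y)
    have "tensor_left (single u a) * tensor_right (single v b) = tensor_right (single v b) * tensor_left (single u a)"
      by (simp add: tensor_left_def tensor_right_def single_zero_mult_mult mult_single mult.commute)
    then show ?case using single_add
      by (simp add: tensor_right_add distrib_left distrib_right)
  qed
  then show ?case using single_add
    by (simp add: tensor_left_add distrib_left distrib_right)
qed

lemma B_Delta_one: "B_Delta p (1::('i,'k::comm_ring_1) fa) = 1"
proof -
  have "B_Delta p (single [] 1 :: ('i,'k) fa) = 1" by (simp only: B_Delta_eq lin_ext_single) simp
  then show ?thesis by simp
qed

lemma B_S_one: "B_S p (1::('i,'k::comm_ring_1) fa) = 1"
proof -
  have "B_S p (single [] 1 :: ('i,'k) fa) = 1" by (simp only: B_S_eq lin_ext_single) simp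
  then show ?thesis by simp
qed

definition eps_word :: "rat set \<Rightarrow> 'i gen list \<Rightarrow> 'k::comm_ring_1" where
  "eps_word G w = prod_list (map (eps_gen G) w)"

lemma B_eps_eq: "B_eps G f = lookup (lin_ext (\<lambda>w. single (0::rat) (eps_word G w)) f) 0"
  by (simp add: B_eps_def lin_ext_def lookup_sum mult_single eps_word_def)

lemma B_eps_single: "B_eps G (single w c) = c * eps_word G w"
  by (simp add: B_eps_eq mult_single)

lemma fa_ideal_mult_both: "a \<in> fa_ideal S \<Longrightarrow> u * a * v \<in> fa_ideal S"
  using fa_ideal.mult[of a S u v] by simp

lemma fa_ideal_mult_left: "a \<in> fa_ideal S \<Longrightarrow> u * a \<in> fa_ideal S"
  using fa_ideal.mult[of a S u 1] by simp

lemma fa_ideal_mult_right: "a \<in> fa_ideal S \<Longrightarrow> a * v \<in> fa_ideal S"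
  using fa_ideal.mult[of a S 1 v] by simp

lemma fa_ideal_uminus: "a \<in> fa_ideal S \<Longrightarrow> - a \<in> fa_ideal S"
  using fa_ideal_mult_left[of a S "-1"] by simp

lemma fa_ideal_diff: "a \<in> fa_ideal S \<Longrightarrow> b \<in> fa_ideal S \<Longrightarrow> a - b \<in> fa_ideal S"
  using fa_ideal.add[of a S "-b"] fa_ideal_uminus by auto

lemma fa_ideal_sum: "(\<And>i. i \<in> A \<Longrightarrow> g i \<in> fa_ideal S) \<Longrightarrow> (\<Sum>i\<in>A. g i) \<in> fa_ideal S"
  by (induction A rule: infinite_finite_induct) (simp_all add: fa_ideal.zero fa_ideal.add)

lemma fa_ideal_lin_ext:
  "(\<And>w. w \<in> keys f \<Longrightarrow> P w \<in> fa_ideal S) \<Longrightarrow> lin_ext P f \<in> fa_ideal S"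
  unfolding lin_ext_def by (rule fa_ideal_sum) (auto intro: fa_ideal_mult_left)

lemma fa_ideal_induct_hom:
  assumes "a \<in> fa_ideal S"
    and "\<And>s. s \<in> S \<Longrightarrow> h s \<in> fa_ideal T"
    and "h 0 = 0" and "\<And>x y. h (x + y) = h x + h y" and "\<And>x y z. h (x * y * z) = h x * h y * h z"
  shows "h a \<in> fa_ideal T"
  using assms(1)
proof (induction a rule: fa_ideal.induct)
  case (gen s) then show ?case using assms(2) by blast
next
  case zero then show ?case using assms(3) fa_ideal.zero by metis
next
  case (add a b) then show ?case using assms(4) fa_ideal.add by metis
next
  case (mult a u v)
  then show ?case using assms(5)[of u a v] by (simp add: fa_ideal_mult_both)
qed

lemma B_rels_cases [consumes 1, case_names X0 XX XY YY Y_power X_outside Y_outside]: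
  assumes "r \<in> B_rels G I p \<chi>"
  obtains "r = single [GX 0] 1 - 1"
  | a b where "a \<in> G" "b \<in> G" "r = single [GX a] 1 * single [GX b] 1 - single [GX (a + b)] 1"
  | a i where "a \<in> G" "i \<in> I"
      "r = single [GX a] 1 * single [GY i] 1 - single 0 (\<chi> (a / of_nat (p i))) * (single [GY i] 1 * single [GX a] 1)"
  | i j where "i \<in> I" "j \<in> I" "r = single [GY i] 1 * single [GY j] 1 - single [GY j] 1 * single [GY i] 1"
  | i j where "i \<in> I" "j \<in> I" "r = single (replicate (p i) (GY i)) 1 - single (replicate (p j) (GY j)) 1"
  | a where "a \<notin> G" "r = single [GX a] 1"
  | i where "i \<notin> I" "r = single [GY i] 1"
  using assms unfolding B_rels_def fa_mult_eq fa_smult_eq fa_X_def fa_Y_def fa_one_eq by blast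

lemma B_rels_B_ideal: "r \<in> B_rels G I p \<chi> \<Longrightarrow> r \<in> B_ideal G I p \<chi>"
  unfolding B_ideal_def by (rule fa_ideal.gen)

lemma B_ideal_X0: "single [GX 0] 1 - 1 \<in> B_ideal G I p \<chi>"
  by (rule B_rels_B_ideal) (unfold B_rels_def fa_X_def fa_one_eq, blast)

lemma B_ideal_XX:
  "a \<in> G \<Longrightarrow> b \<in> G \<Longrightarrow> single [GX a] 1 * single [GX b] 1 - single [GX (a + b)] 1 \<in> B_ideal G I p \<chi>"
  by (rule B_rels_B_ideal) (unfold B_rels_def fa_X_def fa_mult_eq, blast)

lemma B_ideal_XY: "a \<in> G \<Longrightarrow> i \<in> I \<Longrightarrow>
  single [GX a] 1 * single [GY i] 1 - single 0 (\<chi> (a / of_nat (p i))) * (single [GY i] 1 * single [GX a] 1)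
    \<in> B_ideal G I p \<chi>"
  by (rule B_rels_B_ideal) (unfold B_rels_def fa_X_def fa_Y_def fa_mult_eq fa_smult_eq, blast)

lemma B_ideal_Y_commute:
  "i \<in> I \<Longrightarrow> j \<in> I \<Longrightarrow> single [GY i] 1 * single [GY j] 1 - single [GY j] 1 * single [GY i] 1 \<in> B_ideal G I p \<chi>"
  by (rule B_rels_B_ideal) (unfold B_rels_def fa_Y_def fa_mult_eq, blast)

lemma B_ideal_Y_power: "i \<in> I \<Longrightarrow> j \<in> I \<Longrightarrow>
  single (replicate (p i) (GY i)) 1 - single (replicate (p j) (GY j)) 1 \<in> B_ideal G I p \<chi>"
  by (rule B_rels_B_ideal) (unfold B_rels_def, blast)

lemma B_ideal_X_outside: "a \<notin> G \<Longrightarrow> single [GX a] 1 \<in> B_ideal G I p \<chi>"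
  by (rule B_rels_B_ideal) (unfold B_rels_def fa_X_def, blast)

lemma B_ideal_Y_outside: "i \<notin> I \<Longrightarrow> single [GY i] 1 \<in> B_ideal G I p \<chi>"
  by (rule B_rels_B_ideal) (unfold B_rels_def fa_Y_def, blast)

lemma letter_cases [case_names X Y outside]:
  obtains a where "g = GX a" "a \<in> G" | i where "g = GY i" "i \<in> I"
  | "single [g] (1::'k::comm_ring_1) \<in> B_ideal G I p \<chi>"
  by (cases g) (auto intro: B_ideal_X_outside B_ideal_Y_outside)

definition valid_word :: "'i set \<Rightarrow> 'i gen list \<Rightarrow> bool" where
  "valid_word I w \<longleftrightarrow> (\<forall>i. GY i \<in> set w \<longrightarrow> i \<in> I)"

lemma valid_word_simps [simp]: "valid_word I []" "valid_word I (GX a # w) = valid_word I w"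
  "valid_word I (GY i # w) = (i \<in> I \<and> valid_word I w)"
  by (auto simp: valid_word_def)

lemma invalid_word_B_ideal: "\<not> valid_word I w \<Longrightarrow> (single w 1 :: ('i,'k::comm_ring_1) fa) \<in> B_ideal G I p \<chi>"
proof -
  assume "\<not> valid_word I w"
  then obtain i where i: "GY i \<in> set w" "i \<notin> I" by (auto simp: valid_word_def)
  then obtain u v where w: "w = u @ GY i # v" by (meson split_list)
  have "(single w 1 :: ('i,'k) fa) = single u 1 * single [GY i] 1 * single v 1" by (simp add: w mult_single)
  also have "\<dots> \<in> B_ideal G I p \<chi>" using B_ideal_Y_outside[OF i(2)] unfolding B_ideal_def by (rule fa_ideal_mult_both)
  finally show ?thesis .
qed

section \<open>Triangular representations over the group algebra of \<open>\<rat>\<close>\<close>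

text \<open>For \<open>j \<in> I\<close>, sending \<open>x\<^sup>a\<close> (\<open>a \<in> G\<close>) to \<open>diag([a], \<chi>(a/p\<^sub>j)\<^sup>-\<^sup>1[a])\<close> and \<open>y\<^sub>i\<close> to \<open>\<delta>\<^sub>i\<^sub>j E\<^sub>1\<^sub>2\<close>
  defines an algebra map into upper triangular \<open>2 \<times> 2\<close> matrices over \<open>k[\<rat>]\<close>;
  \<open>rep11\<close>, \<open>rep12\<close> and \<open>rep22\<close> are its entries.\<close>

type_synonym 'k kQ = "rat \<Rightarrow>\<^sub>0 'k"

fun rep11_gen :: "rat set \<Rightarrow> 'i gen \<Rightarrow> 'k::comm_ring_1 kQ" where
  "rep11_gen G (GX a) = (if a \<in> G then single a 1 else 0)"
| "rep11_gen G (GY i) = 0"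

fun rep22_gen :: "rat set \<Rightarrow> ('i \<Rightarrow> nat) \<Rightarrow> (rat \<Rightarrow> 'k::field) \<Rightarrow> 'i \<Rightarrow> 'i gen \<Rightarrow> 'k kQ" where
  "rep22_gen G p \<chi> j (GX a) = (if a \<in> G then single a (inverse (\<chi> (a / of_nat (p j)))) else 0)"
| "rep22_gen G p \<chi> j (GY i) = 0"

fun rep12_gen :: "'i \<Rightarrow> 'i gen \<Rightarrow> 'k::comm_ring_1 kQ" where
  "rep12_gen j (GX a) = 0"
| "rep12_gen j (GY i) = (if i = j then 1 else 0)"

fun word_prod :: "('g \<Rightarrow> 'r::monoid_mult) \<Rightarrow> 'g list \<Rightarrow> 'r" where
  "word_prod e [] = 1"
| "word_prod e (g # w) = e g * word_prod e w"

lemma word_prod_append: "word_prod e (u @ v) = word_prod e u * word_prod e v"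
  by (induction u) (simp_all add: mult.assoc)

definition rep11_word :: "rat set \<Rightarrow> 'i gen list \<Rightarrow> 'k::comm_ring_1 kQ" where
  "rep11_word G = word_prod (rep11_gen G)"
definition rep22_word :: "rat set \<Rightarrow> ('i \<Rightarrow> nat) \<Rightarrow> (rat \<Rightarrow> 'k::field) \<Rightarrow> 'i \<Rightarrow> 'i gen list \<Rightarrow> 'k kQ" where
  "rep22_word G p \<chi> j = word_prod (rep22_gen G p \<chi> j)"

fun rep12_word :: "rat set \<Rightarrow> ('i \<Rightarrow> nat) \<Rightarrow> (rat \<Rightarrow> 'k::field) \<Rightarrow> 'i \<Rightarrow> 'i gen list \<Rightarrow> 'k kQ" where
  "rep12_word G p \<chi> j [] = 0"
| "rep12_word G p \<chi> j (g # w) = rep11_gen G g * rep12_word G p \<chi> j w + rep12_gen j g * rep22_word G p \<chi> j w"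

lemma rep11_word_simps [simp]: "rep11_word G [] = 1" "rep11_word G (g # w) = rep11_gen G g * rep11_word G w"
  by (simp_all add: rep11_word_def)
lemma rep22_word_simps [simp]: "rep22_word G p \<chi> j [] = 1" "rep22_word G p \<chi> j (g # w) = rep22_gen G p \<chi> j g * rep22_word G p \<chi> j w"
  by (simp_all add: rep22_word_def)

lemma rep11_word_zero [simp]: "rep11_word G 0 = 1" by (simp add: zero_list_def)
lemma rep22_word_zero [simp]: "rep22_word G p \<chi> j 0 = 1" by (simp add: zero_list_def)
lemma rep12_word_zero [simp]: "rep12_word G p \<chi> j 0 = 0" by (simp add: zero_list_def)

lemma rep11_word_append: "rep11_word G (u @ v) = rep11_word G u * rep11_word G v"
  by (simp add: rep11_word_def word_prod_append)
lemma rep22_word_append: "rep22_word G p \<chi> j (u @ v) = rep22_word G p \<chi> j u * rep22_word G p \<chi> j v"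
  by (simp add: rep22_word_def word_prod_append)
lemma rep12_word_append: "rep12_word G p \<chi> j (u @ v) = rep11_word G u * rep12_word G p \<chi> j v + rep12_word G p \<chi> j u * rep22_word G p \<chi> j v"
  by (induction u) (simp_all add: rep22_word_append algebra_simps)

lemma rep11_word_Y: "GY i \<in> set w \<Longrightarrow> rep11_word G w = 0"
  by (induction w) auto
lemma rep22_word_Y: "GY i \<in> set w \<Longrightarrow> rep22_word G p \<chi> j w = 0"
  by (induction w) auto

lemma rep12_word_replicate: "n \<ge> 2 \<Longrightarrow> rep12_word G p \<chi> j (replicate n (GY i)) = 0"
proof -
  assume "n \<ge> 2"
  then obtain m where "n = Suc (Suc m)" by (metis add_2_eq_Suc le_Suc_ex)
  then show ?thesis by (simp add: rep11_word_Y rep22_word_Y)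
qed

definition rep11 :: "rat set \<Rightarrow> ('i,'k::comm_ring_1) fa \<Rightarrow> 'k kQ" where
  "rep11 G = lin_ext (rep11_word G)"
definition rep22 :: "rat set \<Rightarrow> ('i \<Rightarrow> nat) \<Rightarrow> (rat \<Rightarrow> 'k::field) \<Rightarrow> 'i \<Rightarrow> ('i,'k) fa \<Rightarrow> 'k kQ" where
  "rep22 G p \<chi> j = lin_ext (rep22_word G p \<chi> j)"
definition rep12 :: "rat set \<Rightarrow> ('i \<Rightarrow> nat) \<Rightarrow> (rat \<Rightarrow> 'k::field) \<Rightarrow> 'i \<Rightarrow> ('i,'k) fa \<Rightarrow> 'k kQ" where
  "rep12 G p \<chi> j = lin_ext (rep12_word G p \<chi> j)"

lemma rep11_mult: "rep11 G (f * g) = rep11 G f * rep11 G g"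
  unfolding rep11_def by (rule lin_ext_mult) (simp add: rep11_word_append)
lemma rep22_mult: "rep22 G p \<chi> j (f * g) = rep22 G p \<chi> j f * rep22 G p \<chi> j g"
  unfolding rep22_def by (rule lin_ext_mult) (simp add: rep22_word_append)
lemma rep12_mult: "rep12 G p \<chi> j (f * g) = rep11 G f * rep12 G p \<chi> j g + rep12 G p \<chi> j f * rep22 G p \<chi> j g"
  unfolding rep12_def rep11_def rep22_def by (rule lin_ext_mult_derivation) (simp add: rep12_word_append)

lemma rep11_add: "rep11 G (f + g) = rep11 G f + rep11 G g" by (simp add: rep11_def lin_ext_add)
lemma rep22_add: "rep22 G p \<chi> j (f + g) = rep22 G p \<chi> j f + rep22 G p \<chi> j g" by (simp add: rep22_def lin_ext_add)
lemma rep12_add: "rep12 G p \<chi> j (f + g) = rep12 G p \<chi> j f + rep12 G p \<chi> j g" by (simp add: rep12_def lin_ext_add)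
lemma rep11_diff: "rep11 G (f - g) = rep11 G f - rep11 G g" by (simp add: rep11_def lin_ext_diff)
lemma rep22_diff: "rep22 G p \<chi> j (f - g) = rep22 G p \<chi> j f - rep22 G p \<chi> j g" by (simp add: rep22_def lin_ext_diff)
lemma rep12_diff: "rep12 G p \<chi> j (f - g) = rep12 G p \<chi> j f - rep12 G p \<chi> j g" by (simp add: rep12_def lin_ext_diff)

lemma rep11_scale: "rep11 G (single 0 c * f) = single 0 c * rep11 G f" by (simp add: rep11_def lin_ext_scale)

lemma rep22_scale: "rep22 G p \<chi> j (single 0 c * f) = single 0 c * rep22 G p \<chi> j f" by (simp add: rep22_def lin_ext_scale)

lemma rep12_scale: "rep12 G p \<chi> j (single 0 c * f) = single 0 c * rep12 G p \<chi> j f" by (simp add: rep12_def lin_ext_scale)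
lemma rep11_single [simp]: "rep11 G (single w c) = single 0 c * rep11_word G w" by (simp add: rep11_def)
lemma rep22_single [simp]: "rep22 G p \<chi> j (single w c) = single 0 c * rep22_word G p \<chi> j w" by (simp add: rep22_def)
lemma rep12_single [simp]: "rep12 G p \<chi> j (single w c) = single 0 c * rep12_word G p \<chi> j w" by (simp add: rep12_def)
lemma one_fa_eq: "(1::('i,'k::comm_ring_1) fa) = single [] 1" by simp
lemma rep11_one [simp]: "rep11 G 1 = 1" by (subst one_fa_eq, simp only: rep11_single rep11_word_simps) simp
lemma rep22_one [simp]: "rep22 G p \<chi> j 1 = 1" by (subst one_fa_eq, simp only: rep22_single rep22_word_simps) simp
lemma rep12_one [simp]: "rep12 G p \<chi> j 1 = 0" by (subst one_fa_eq, simp only: rep12_single rep12_word.simps) simp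

lemma GM_mem: "i \<in> I \<Longrightarrow> a \<in> G \<Longrightarrow> a / of_nat (p i) \<in> GM G I p"
  unfolding GM_def
  by (rule CollectI, rule exI[of _ "{i}"], rule exI[of _ "\<lambda>_. a"]) simp

lemma GM_zero: "0 \<in> GM G I p"
  unfolding GM_def by (rule CollectI, rule exI[of _ "{}"]) simp

lemma GM_add:
  assumes add: "\<And>a b. a \<in> G \<Longrightarrow> b \<in> G \<Longrightarrow> a + b \<in> G" and z: "0 \<in> G"
    and x: "x \<in> GM G I p" and y: "y \<in> GM G I p"
  shows "x + y \<in> GM G I p"
proof -
  obtain F1 g1 where 1: "finite F1" "F1 \<subseteq> I" "\<forall>i\<in>F1. g1 i \<in> G" "x = (\<Sum>i\<in>F1. g1 i / of_nat (p i))"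
    using x unfolding GM_def by blast
  obtain F2 g2 where 2: "finite F2" "F2 \<subseteq> I" "\<forall>i\<in>F2. g2 i \<in> G" "y = (\<Sum>i\<in>F2. g2 i / of_nat (p i))"
    using y unfolding GM_def by blast
  let ?h1 = "\<lambda>i. if i \<in> F1 then g1 i else 0" and ?h2 = "\<lambda>i. if i \<in> F2 then g2 i else 0"
  have e1: "x = (\<Sum>i\<in>F1 \<union> F2. ?h1 i / of_nat (p i))"
    unfolding 1(4) by (rule sum.mono_neutral_cong_left) (use 1 2 in auto)
  have e2: "y = (\<Sum>i\<in>F1 \<union> F2. ?h2 i / of_nat (p i))"
    unfolding 2(4) by (rule sum.mono_neutral_cong_left) (use 1 2 in auto)
  have s: "x + y = (\<Sum>i\<in>F1 \<union> F2. (?h1 i + ?h2 i) / of_nat (p i))"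
    unfolding e1 e2 by (simp add: sum.distrib add_divide_distrib)
  have g: "\<forall>i\<in>F1 \<union> F2. ?h1 i + ?h2 i \<in> G" using 1(3) 2(3) add z by auto
  show ?thesis unfolding GM_def
    by (rule CollectI, rule exI[of _ "F1 \<union> F2"], rule exI[of _ "\<lambda>i. ?h1 i + ?h2 i"])
       (use s g 1 2 in auto)
qed

lemma GM_induct [consumes 1, case_names zero add]:
  assumes q: "q \<in> GM G I p" and zero: "P 0"
    and add: "\<And>i a q. i \<in> I \<Longrightarrow> a \<in> G \<Longrightarrow> q \<in> GM G I p \<Longrightarrow> P q \<Longrightarrow> P (a / of_nat (p i) + q)"
  shows "P q"
proof -
  obtain F g where F: "finite F" "F \<subseteq> I" "\<forall>i\<in>F. g i \<in> G" and q_eq: "q = (\<Sum>i\<in>F. g i / of_nat (p i))"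
    using q unfolding GM_def by blast
  have "P (\<Sum>i\<in>F'. g i / of_nat (p i))" if "F' \<subseteq> F" for F'
    using finite_subset[OF that F(1)] that
  proof (induction F' rule: finite_induct)
    case (insert i F')
    have "(\<Sum>i\<in>F'. g i / of_nat (p i)) \<in> GM G I p"
      unfolding GM_def using insert F by blast
    then show ?case using insert F add[of i "g i"] by auto
  qed (simp add: zero)
  then show ?thesis using q_eq by blast
qed

lemma coprime_cross_mult_eq:
  fixes p1 p2 q1 q2 :: nat
  assumes "coprime p1 p2" "coprime q1 q2" "p1 * q2 = p2 * q1"
  shows "p1 = q1"
proof -
  have "p1 dvd p2 * q1" using assms(3) by (metis dvd_triv_left)
  then have a: "p1 dvd q1" using assms(1) by (simp add: coprime_dvd_mult_right_iff)
  have "q1 dvd p1 * q2" using assms(3) by (metis dvd_triv_right)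
  then have b: "q1 dvd p1" using assms(2) by (simp add: coprime_dvd_mult_left_iff)
  show ?thesis using a b by (rule dvd_antisym)
qed

lemma additive_on_of_nat_mult:
  fixes f :: "'a::comm_semiring_1 \<Rightarrow> 'b::comm_semiring_1"
  assumes add_G: "\<And>a b. a \<in> G \<Longrightarrow> b \<in> G \<Longrightarrow> a + b \<in> G"
    and add_f: "\<And>a b. a \<in> G \<Longrightarrow> b \<in> G \<Longrightarrow> f (a + b) = f a + f b"
    and x: "x \<in> G"
  shows "of_nat (Suc k) * x \<in> G \<and> f (of_nat (Suc k) * x) = of_nat (Suc k) * f x"
proof (induction k)
  case (Suc k)
  have e: "of_nat (Suc (Suc k)) * x = of_nat (Suc k) * x + x" by (simp add: algebra_simps)
  have h: "of_nat (Suc k) * x \<in> G" "f (of_nat (Suc k) * x) = of_nat (Suc k) * f x" using Suc.IH by auto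
  show ?case unfolding e using add_G[OF h(1) x] add_f[OF h(1) x] h(2) by (simp add: algebra_simps)
qed (use x in simp)

lemma additive_on_rat_linear:
  fixes f :: "rat \<Rightarrow> rat"
  assumes add_G: "\<And>a b. a \<in> G \<Longrightarrow> b \<in> G \<Longrightarrow> a + b \<in> G" and one: "1 \<in> G"
    and add_f: "\<And>a b. a \<in> G \<Longrightarrow> b \<in> G \<Longrightarrow> f (a + b) = f a + f b"
    and a: "a \<in> G"
  shows "f a = a * f 1"
proof -
  have mult: "of_nat (Suc k) * x \<in> G \<and> f (of_nat (Suc k) * x) = of_nat (Suc k) * f x" if "x \<in> G" for k x
    using additive_on_of_nat_mult[OF add_G add_f that] by blast
  have zero: "f 0 = 0" if "0 \<in> G"
    using add_f[OF that that] by simp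
  obtain m n where q: "quotient_of a = (m, n)" by fastforce
  have n: "n > 0" using quotient_of_denom_pos[OF q] .
  then obtain n' where "nat n = Suc n'" using gr0_implies_Suc[of "nat n"] by auto
  then have n': "of_int n = (of_nat (Suc n') :: rat)" using n by (metis of_int_of_nat_eq of_nat_nat order.strict_implies_order)
  have na: "of_nat (Suc n') * a = of_int m" using quotient_of_div[OF q] n n' by simp
  have fna: "f (of_int m) = of_nat (Suc n') * f a" using mult[OF a, of n'] na by simp
  consider "m > 0" | "m = 0" | "m < 0" by linarith
  then have "of_nat (Suc n') * f a = of_int m * f 1"
  proof cases
    case 1
    then obtain m' where "nat m = Suc m'" using gr0_implies_Suc[of "nat m"] by auto
    then have "of_int m = (of_nat (Suc m') :: rat)" using 1 by (metis of_int_of_nat_eq of_nat_nat order.strict_implies_order)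
    then show ?thesis using fna mult[OF one, of m'] by simp
  next
    case 2
    then show ?thesis using fna zero mult[OF a, of n'] na by simp
  next
    case 3
    then obtain m' where "nat (- m) = Suc m'" using gr0_implies_Suc[of "nat (- m)"] by auto
    then have m': "of_int m = - (of_nat (Suc m') :: rat)" using 3 by (metis add.inverse_inverse neg_0_le_iff_le of_int_minus of_int_of_nat_eq of_nat_nat order.strict_implies_order)
    have A: "of_nat (Suc n') * a \<in> G" "f (of_nat (Suc n') * a) = of_nat (Suc n') * f a" using mult[OF a] by auto
    have B: "of_nat (Suc m') * 1 \<in> G" "f (of_nat (Suc m') * 1) = of_nat (Suc m') * f 1" using mult[OF one] by auto
    have sum0: "of_nat (Suc n') * a + of_nat (Suc m') * 1 = 0" using na m' by simp
    have "0 \<in> G" using add_G[OF A(1) B(1)] unfolding sum0 .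
    then have "f (of_nat (Suc n') * a) + f (of_nat (Suc m') * 1) = 0"
      using add_f[OF A(1) B(1)] zero unfolding sum0 by simp
    then show ?thesis unfolding A(2) B(2) m' by (simp add: algebra_simps)
  qed
  also have "\<dots> = of_nat (Suc n') * (a * f 1)" unfolding na[symmetric] by simp
  finally show ?thesis by simp
qed

context
  fixes G :: "rat set" and I :: "'i set" and p :: "'i \<Rightarrow> nat" and \<chi> :: "rat \<Rightarrow> 'k::field"
  assumes D: "B_data G I p \<chi>"
begin

lemma B_data_G_add: "a \<in> G \<Longrightarrow> b \<in> G \<Longrightarrow> a + b \<in> G" using D unfolding B_data_def by blast
lemma B_data_G_uminus: "a \<in> G \<Longrightarrow> - a \<in> G" using D unfolding B_data_def by blast
lemma B_data_G_of_int: "of_int n \<in> G" using D unfolding B_data_def by blast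
lemma B_data_G_zero: "0 \<in> G" using B_data_G_of_int[of 0] by simp
lemma B_data_p_ge_2: "i \<in> I \<Longrightarrow> p i \<ge> 2" using D unfolding B_data_def by blast
lemma B_data_p_coprime: "i \<in> I \<Longrightarrow> j \<in> I \<Longrightarrow> i \<noteq> j \<Longrightarrow> coprime (p i) (p j)" using D unfolding B_data_def by blast
lemma B_data_inv_p_mem: "i \<in> I \<Longrightarrow> 1 / of_nat (p i) \<in> G" using D unfolding B_data_def by blast
lemma B_data_chi_nonzero: "q \<in> GM G I p \<Longrightarrow> \<chi> q \<noteq> 0" using D unfolding B_data_def by blast
lemma B_data_chi_add: "q \<in> GM G I p \<Longrightarrow> q' \<in> GM G I p \<Longrightarrow> \<chi> (q + q') = \<chi> q * \<chi> q'" using D unfolding B_data_def by blast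
lemma B_data_chi_primitive: "i \<in> I \<Longrightarrow> primitive_root (\<chi> (1 / of_nat (p i) ^ 2)) (p i)" using D unfolding B_data_def by blast
lemma B_data_two_indices: "\<exists>i\<in>I. \<exists>j\<in>I. i \<noteq> j" using D unfolding B_data_def by blast

lemma B_data_chi_zero: "\<chi> 0 = 1"
proof -
  have "\<chi> 0 * \<chi> 0 = \<chi> 0 * 1" using B_data_chi_add[OF GM_zero GM_zero] by simp
  then show ?thesis using B_data_chi_nonzero[OF GM_zero] mult_left_cancel by blast
qed

lemma B_data_chi_ne_1: "i \<in> I \<Longrightarrow> \<chi> ((1 / of_nat (p i)) / of_nat (p i)) \<noteq> 1"
proof -
  assume i: "i \<in> I"
  have "(1 / of_nat (p i) :: rat) / of_nat (p i) = 1 / of_nat (p i) ^ 2" by (simp add: power2_eq_square)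
  moreover have "0 < (1::nat) \<and> 1 < p i" using B_data_p_ge_2[OF i] by simp
  then have "\<chi> (1 / of_nat (p i) ^ 2) ^ 1 \<noteq> 1"
    using B_data_chi_primitive[OF i] unfolding primitive_root_def by blast
  ultimately show ?thesis by simp
qed

lemma B_data_chi_div_add: "i \<in> I \<Longrightarrow> a \<in> G \<Longrightarrow> b \<in> G \<Longrightarrow>
   \<chi> ((a + b) / of_nat (p i)) = \<chi> (a / of_nat (p i)) * \<chi> (b / of_nat (p i))"
  by (simp add: add_divide_distrib B_data_chi_add GM_mem)

lemma reps_kill_B_rels:
  assumes r: "r \<in> B_rels G I p \<chi>" and j: "j \<in> I"
  shows "rep11 G r = 0 \<and> rep22 G p \<chi> j r = 0 \<and> rep12 G p \<chi> j r = 0"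
  using r
proof (cases rule: B_rels_cases)
  case X0
  then show ?thesis by (simp add: rep11_diff rep22_diff rep12_diff B_data_G_zero B_data_chi_zero)
next
  case (XX a b)
  then show ?thesis using B_data_G_add[of a b] j
    by (simp add: rep11_diff rep22_diff rep12_diff rep11_mult rep22_mult rep12_mult mult_single
        B_data_chi_div_add add_divide_distrib[symmetric])
next
  case (XY a i)
  have "\<chi> (a / of_nat (p i)) \<noteq> 0" using B_data_chi_nonzero[OF GM_mem[OF XY(2,1)]] .
  then show ?thesis using XY
    by (cases "i = j") (simp_all add: rep11_diff rep22_diff rep12_diff mult_single)
next
  case (YY i k)
  then show ?thesis by (simp add: rep11_diff rep22_diff rep12_diff rep11_mult rep22_mult rep12_mult)
next
  case (Y_power i k)
  have "GY i \<in> set (replicate (p i) (GY i))" "GY k \<in> set (replicate (p k) (GY k))"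
    using B_data_p_ge_2[OF Y_power(1)] B_data_p_ge_2[OF Y_power(2)] by auto
  then show ?thesis using Y_power B_data_p_ge_2[OF Y_power(1)] B_data_p_ge_2[OF Y_power(2)]
    by (simp add: rep11_diff rep22_diff rep12_diff rep11_word_Y rep22_word_Y rep12_word_replicate)
qed (use j in auto)

lemma reps_kill_B_ideal:
  assumes r: "r \<in> B_ideal G I p \<chi>" and j: "j \<in> I"
  shows "rep11 G r = 0 \<and> rep22 G p \<chi> j r = 0 \<and> rep12 G p \<chi> j r = 0"
  using r unfolding B_ideal_def
proof (induction r rule: fa_ideal.induct)
  case (gen s) then show ?case using reps_kill_B_rels j by blast
next
  case zero then show ?case by (simp add: rep11_def rep22_def rep12_def)
next
  case (add a b) then show ?case by (simp add: rep11_add rep22_add rep12_add)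
next
  case (mult a u v)
  then show ?case by (simp add: rep11_mult rep22_mult rep12_mult)
qed

end

lemma chi_eq_on_GM_of_generators:
  assumes D: "B_data G I p \<chi>" and D': "B_data G' I' p' \<chi>'" and G: "G' = G" and p: "p ` I \<subseteq> p' ` I'"
    and gen: "\<And>i a. i \<in> I \<Longrightarrow> a \<in> G \<Longrightarrow> \<chi> (a / of_nat (p i)) = \<chi>' (a / of_nat (p i))"
  shows "\<forall>q\<in>GM G I p. \<chi> q = \<chi>' q"
proof
  fix q assume "q \<in> GM G I p"
  then have "q \<in> GM G' I' p' \<and> \<chi> q = \<chi>' q"
  proof (induction rule: GM_induct)
    case zero
    then show ?case by (simp add: GM_zero B_data_chi_zero[OF D] B_data_chi_zero[OF D'])
  next
    case (add i a q)
    obtain j where j: "j \<in> I'" "p i = p' j" using p add(1) by blast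
    have m: "a / of_nat (p i) \<in> GM G I p" "a / of_nat (p i) \<in> GM G' I' p'"
      using GM_mem[OF add(1,2), of p] GM_mem[OF j(1), of a G' p'] add(2) G j(2) by simp_all
    show ?case
      using GM_add[OF B_data_G_add[OF D'] B_data_G_zero[OF D'] m(2)] add(3,4)
        B_data_chi_add[OF D m(1) add(3)] B_data_chi_add[OF D' m(2)] gen[OF add(1,2)] by simp
  qed
  then show "\<chi> q = \<chi>' q" ..
qed

lemma B_data_inj_on_p:
  assumes "B_data G I p \<chi>"
  shows "inj_on p I"
proof (rule inj_onI, rule ccontr)
  fix i j assume ij: "i \<in> I" "j \<in> I" "p i = p j" "i \<noteq> j"
  then have "coprime (p i) (p i)" using B_data_p_coprime[OF assms] by metis
  then show False using B_data_p_ge_2[OF assms ij(1)] by simp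
qed

type_synonym 'k kQ2 = "(rat \<times> rat) \<Rightarrow>\<^sub>0 'k"

definition kQ_emb_left :: "'k::comm_ring_1 kQ \<Rightarrow> 'k kQ2" where "kQ_emb_left = lin_ext (\<lambda>e. single (e, 0) 1)"
definition kQ_emb_right :: "'k::comm_ring_1 kQ \<Rightarrow> 'k kQ2" where "kQ_emb_right = lin_ext (\<lambda>e. single (0, e) 1)"
text \<open>\<open>k[\<rat>] \<otimes> k[\<rat>]\<close> is identified with \<open>k[\<rat> \<times> \<rat>]\<close>.\<close>

definition kQ_tensor :: "'k::comm_ring_1 kQ \<Rightarrow> 'k kQ \<Rightarrow> 'k kQ2" where "kQ_tensor x y = kQ_emb_left x * kQ_emb_right y"
definition kQ_Delta :: "'k::comm_ring_1 kQ \<Rightarrow> 'k kQ2" where "kQ_Delta = lin_ext (\<lambda>e. single (e, e) 1)"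

lemma kQ_emb_left_mult: "kQ_emb_left (x * y) = kQ_emb_left x * kQ_emb_left y"
  unfolding kQ_emb_left_def by (rule lin_ext_mult) (simp add: mult_single)
lemma kQ_emb_right_mult: "kQ_emb_right (x * y) = kQ_emb_right x * kQ_emb_right y"
  unfolding kQ_emb_right_def by (rule lin_ext_mult) (simp add: mult_single)
lemma kQ_Delta_mult: "kQ_Delta (x * y) = kQ_Delta x * kQ_Delta y"
  unfolding kQ_Delta_def by (rule lin_ext_mult) (simp add: mult_single)
lemma kQ_Delta_add: "kQ_Delta (x + y) = kQ_Delta x + kQ_Delta y" by (simp add: kQ_Delta_def lin_ext_add)
lemma kQ_Delta_single [simp]: "kQ_Delta (single a c) = single (a, a) c" by (simp add: kQ_Delta_def mult_single)
lemma kQ_Delta_one [simp]: "kQ_Delta 1 = 1"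
  by (metis kQ_Delta_single single_one zero_prod_def)
lemma kQ_Delta_zero [simp]: "kQ_Delta 0 = 0" by (simp add: kQ_Delta_def)

lemma kQ_tensor_add_left: "kQ_tensor (x + x') y = kQ_tensor x y + kQ_tensor x' y"
  by (simp add: kQ_tensor_def kQ_emb_left_def lin_ext_add distrib_right)
lemma kQ_tensor_add_right: "kQ_tensor x (y + y') = kQ_tensor x y + kQ_tensor x y'"
  by (simp add: kQ_tensor_def kQ_emb_right_def lin_ext_add distrib_left)
lemma kQ_tensor_zero [simp]: "kQ_tensor 0 y = 0" "kQ_tensor x 0 = 0"
  by (simp_all add: kQ_tensor_def kQ_emb_left_def kQ_emb_right_def)
lemma kQ_tensor_mult: "kQ_tensor (a * b) (c * d) = kQ_tensor a c * kQ_tensor b d"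
  by (simp add: kQ_tensor_def kQ_emb_left_mult kQ_emb_right_mult algebra_simps)
lemma kQ_tensor_single [simp]: "kQ_tensor (single a u) (single b v) = single (a, b) (u * v)"
  by (simp add: kQ_tensor_def kQ_emb_left_def kQ_emb_right_def mult_single mult.assoc[symmetric]
      single_zero_commute[of u "single (a,0) 1"])
lemma kQ_tensor_one [simp]: "kQ_tensor 1 1 = 1"
  by (metis kQ_tensor_single mult_1 single_one zero_prod_def)

lemma lookup_kQ_tensor: "lookup (kQ_tensor x y) (c, d) = lookup x c * lookup y d"
proof (induction x rule: poly_mapping_induct)
  case zero then show ?case by simp
next
  case (single_add a u x)
  have "lookup (kQ_tensor (single a u) y) (c, d) = lookup (single a u) c * lookup y d"
  proof (induction y rule: poly_mapping_induct)
    case zero then show ?case by simp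
  next
    case (single_add b v y)
    then show ?case by (simp add: kQ_tensor_add_right lookup_add lookup_single when_def distrib_left)
  qed
  with single_add show ?case by (simp add: kQ_tensor_add_left lookup_add distrib_right)
qed

lemma lookup_kQ_Delta: "lookup (kQ_Delta x) (c, d) = (if c = d then lookup x c else 0)"
proof (induction x rule: poly_mapping_induct)
  case zero then show ?case by simp
next
  case (single_add a u x)
  then show ?case by (auto simp: kQ_Delta_add lookup_add lookup_single when_def)
qed

lemma lookup_kQ_Delta_shift: "lookup (kQ_Delta x * single (s, 0) 1) (c, d) = (if c = d + s then lookup x d else 0)"
proof (induction x rule: poly_mapping_induct)
  case zero then show ?case by simp
next
  case (single_add a u x)
  then show ?case by (auto simp: kQ_Delta_add distrib_right lookup_add lookup_single when_def mult_single)
qed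

definition kQ_eps :: "'k::comm_ring_1 kQ \<Rightarrow> 'k" where "kQ_eps x = lookup (lin_ext (\<lambda>_. 1 :: 'k kQ) x) 0"

lemma kQ_eps_eq: "kQ_eps x = (\<Sum>b\<in>keys x. lookup x b)"
  by (simp add: kQ_eps_def lookup_lin_ext)

lemma kQ_grouplike:
  fixes \<theta> :: "'k::field kQ"
  assumes bx: "kQ_tensor \<theta> \<theta> = kQ_Delta \<theta>" and au: "kQ_eps \<theta> = 1"
  shows "\<exists>b. \<theta> = single b 1"
proof -
  have kne: "keys \<theta> \<noteq> {}" using au by (auto simp: kQ_eps_eq)
  then obtain b where b: "b \<in> keys \<theta>" by blast
  have e: "lookup \<theta> c * lookup \<theta> d = (if c = d then lookup \<theta> c else 0)" for c d
    using arg_cong[OF bx, of "\<lambda>x. lookup x (c, d)"] by (simp add: lookup_kQ_tensor lookup_kQ_Delta)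
  have b1: "lookup \<theta> b = 1"
    using e[of b b] b by (simp add: in_keys_iff)
  have "\<theta> = single b 1"
  proof (rule poly_mapping_eqI)
    fix d show "lookup \<theta> d = lookup (single b 1) d"
    proof (cases "d = b")
      case True then show ?thesis using b1 by simp
    next
      case False
      then have "lookup \<theta> b * lookup \<theta> d = 0" using e[of b d] by simp
      then show ?thesis using b1 False by (simp add: lookup_single when_def)
    qed
  qed
  then show ?thesis by blast
qed

definition rep_tensor :: "('i gen list \<Rightarrow> 'k::comm_ring_1 kQ) \<Rightarrow> ('i gen list \<Rightarrow> 'k kQ) \<Rightarrow> ('i, 'k) ft \<Rightarrow> 'k kQ2" where
  "rep_tensor \<alpha> \<beta> = lin_ext (\<lambda>uv. kQ_tensor (\<alpha> (fst uv)) (\<beta> (snd uv)))"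

lemma rep_tensor_single [simp]: "rep_tensor \<alpha> \<beta> (single (u, v) c) = single 0 c * kQ_tensor (\<alpha> u) (\<beta> v)"
  by (simp add: rep_tensor_def)

lemma rep_tensor_one [simp]: "rep_tensor \<alpha> \<beta> 1 = kQ_tensor (\<alpha> []) (\<beta> [])"
proof -
  have "(1::('i,'k::comm_ring_1) ft) = single ([],[]) 1" by simp
  then show ?thesis by (subst (1) \<open>1 = _\<close>, simp only: rep_tensor_single) simp
qed

lemma rep_tensor_add: "rep_tensor \<alpha> \<beta> (x + y) = rep_tensor \<alpha> \<beta> x + rep_tensor \<alpha> \<beta> y"
  by (simp add: rep_tensor_def lin_ext_add)

lemma rep_tensor_diff: "rep_tensor \<alpha> \<beta> (x - y) = rep_tensor \<alpha> \<beta> x - rep_tensor \<alpha> \<beta> y"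
  by (simp add: rep_tensor_def lin_ext_diff)

lemma rep_tensor_scale: "rep_tensor \<alpha> \<beta> (single 0 c * x) = single 0 c * rep_tensor \<alpha> \<beta> x"
  by (simp add: rep_tensor_def lin_ext_scale)

lemma kQ_tensor_scale_left: "kQ_tensor (single 0 c * x) y = single 0 c * kQ_tensor x y"
  by (simp add: kQ_tensor_def kQ_emb_left_def lin_ext_scale mult.assoc)
lemma kQ_tensor_scale_right: "kQ_tensor x (single 0 c * y) = single 0 c * kQ_tensor x y"
  by (simp add: kQ_tensor_def kQ_emb_right_def lin_ext_scale mult.assoc mult.left_commute)

lemma kQ_tensor_sum_left: "kQ_tensor (\<Sum>i\<in>A. f i) y = (\<Sum>i\<in>A. kQ_tensor (f i) y)"
  by (induction A rule: infinite_finite_induct) (simp_all add: kQ_tensor_add_left)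
lemma kQ_tensor_sum_right: "kQ_tensor x (\<Sum>i\<in>A. f i) = (\<Sum>i\<in>A. kQ_tensor x (f i))"
  by (induction A rule: infinite_finite_induct) (simp_all add: kQ_tensor_add_right)

lemma rep_tensor_ft_tensor: "rep_tensor \<alpha> \<beta> (ft_tensor f g) = kQ_tensor (lin_ext \<alpha> f) (lin_ext \<beta> g)"
proof -
  have "rep_tensor \<alpha> \<beta> (ft_tensor f g) = (\<Sum>u\<in>keys f. \<Sum>v\<in>keys g. single 0 (lookup f u * lookup g v) * kQ_tensor (\<alpha> u) (\<beta> v))"
    by (simp add: ft_tensor_def rep_tensor_def lin_ext_sum)
  also have "\<dots> = kQ_tensor (lin_ext \<alpha> f) (lin_ext \<beta> g)"
    apply (simp add: lin_ext_def kQ_tensor_sum_left kQ_tensor_sum_right kQ_tensor_scale_left kQ_tensor_scale_right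
        mult.assoc single_zero_mult[symmetric] sum_distrib_left)
    apply (subst sum.swap)
    apply (simp add: mult.left_commute)
    done
  finally show ?thesis .
qed

lemma rep_tensor_ft_ideal:
  assumes h: "h \<in> ft_ideal R"
    and a: "\<And>r. r \<in> R \<Longrightarrow> lin_ext \<alpha> r = 0" and b: "\<And>r. r \<in> R \<Longrightarrow> lin_ext \<beta> r = 0"
  shows "rep_tensor \<alpha> \<beta> h = 0"
  using h
proof (induction h rule: ft_ideal.induct)
  case zero then show ?case by (simp add: rep_tensor_def)
next
  case (left r f) then show ?case by (simp add: rep_tensor_ft_tensor a)
next
  case (right r f) then show ?case by (simp add: rep_tensor_ft_tensor b)
next
  case (add a b) then show ?case by (simp add: rep_tensor_add)
qed

lemma rep_tensor_mult:
  assumes "\<And>u v. \<alpha> (u @ v) = \<alpha> u * \<alpha> v" and "\<And>u v. \<beta> (u @ v) = \<beta> u * \<beta> v"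
  shows "rep_tensor \<alpha> \<beta> (A * B) = rep_tensor \<alpha> \<beta> A * rep_tensor \<alpha> \<beta> B"
  unfolding rep_tensor_def by (rule lin_ext_mult) (simp add: assms kQ_tensor_mult)

lemma rep_tensor_mult_derivation_right:
  assumes "\<And>u v. \<alpha> (u @ v) = \<alpha> u * \<alpha> v"
    and "\<And>u v. \<mu> (u @ v) = \<alpha> u * \<mu> v + \<mu> u * \<tau> v"
  shows "rep_tensor \<alpha> \<mu> (A * B) = rep_tensor \<alpha> \<alpha> A * rep_tensor \<alpha> \<mu> B + rep_tensor \<alpha> \<mu> A * rep_tensor \<alpha> \<tau> B"
  unfolding rep_tensor_def by (rule lin_ext_mult_derivation) (simp add: assms kQ_tensor_mult kQ_tensor_add_right)

lemma rep_tensor_mult_derivation_left: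
  assumes "\<And>u v. \<alpha> (u @ v) = \<alpha> u * \<alpha> v"
    and "\<And>u v. \<mu> (u @ v) = \<alpha> u * \<mu> v + \<mu> u * \<tau> v"
  shows "rep_tensor \<mu> \<alpha> (A * B) = rep_tensor \<alpha> \<alpha> A * rep_tensor \<mu> \<alpha> B + rep_tensor \<mu> \<alpha> A * rep_tensor \<tau> \<alpha> B"
  unfolding rep_tensor_def by (rule lin_ext_mult_derivation) (simp add: assms kQ_tensor_mult kQ_tensor_add_left)

lemma rep_tensor_lin_ext: "rep_tensor \<alpha> \<beta> (lin_ext P f) = lin_ext (\<lambda>w. rep_tensor \<alpha> \<beta> (P w)) f"
  by (simp add: rep_tensor_def lin_ext_compose)

lemma kQ_Delta_lin_ext: "kQ_Delta (lin_ext P f) = lin_ext (\<lambda>w. kQ_Delta (P w)) f"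
  by (simp add: kQ_Delta_def lin_ext_compose)

lemma rep_tensor_11_11_gen: "rep_tensor (rep11_word G) (rep11_word G) (delta_gen p g) = kQ_Delta (rep11_gen G g :: 'k::comm_ring_1 kQ)"
  by (cases g) (simp_all add: rep_tensor_add)

lemma rep_tensor_11_22_gen: "rep_tensor (rep11_word G) (rep22_word G p \<chi> j) (delta_gen p g) = kQ_Delta (rep22_gen G p \<chi> j g :: 'k::field kQ)"
  by (cases g) (simp_all add: rep_tensor_add)

lemma rep_tensor_22_11_gen: "rep_tensor (rep22_word G p \<chi> j) (rep11_word G) (delta_gen p g) = kQ_Delta (rep22_gen G p \<chi> j g :: 'k::field kQ)"
  by (cases g) (simp_all add: rep_tensor_add)

text \<open>The shift by \<open>1/p\<^sub>j\<close> comes from \<open>\<Delta>(y\<^sub>j) = y\<^sub>j \<otimes> 1 + x\<^bsup>1/p\<^sub>j\<^esup> \<otimes> y\<^sub>j\<close>.\<close>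

lemma rep_tensor_11_12_gen: "1 / of_nat (p j) \<in> G \<Longrightarrow>
  rep_tensor (rep11_word G) (rep12_word G p \<chi> j) (delta_gen p g) = kQ_Delta (rep12_gen j g :: 'k::field kQ) * single (1 / of_nat (p j), 0) 1"
  by (cases g) (auto simp: rep_tensor_add kQ_tensor_single[of _ 1 0 1, simplified])

lemma rep_tensor_12_11_gen: "rep_tensor (rep12_word G p \<chi> j) (rep11_word G) (delta_gen p g) = kQ_Delta (rep12_gen j g :: 'k::field kQ)"
  by (cases g) (simp_all add: rep_tensor_add)

lemma rep_tensor_11_11_word: "rep_tensor (rep11_word G) (rep11_word G) (delta_word p w) = kQ_Delta (rep11_word G w :: 'k::comm_ring_1 kQ)"
proof (induction w)
  case Nil then show ?case by simp
next
  case (Cons g w)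
  then show ?case by (simp add: rep_tensor_mult rep11_word_append rep_tensor_11_11_gen kQ_Delta_mult)
qed

lemma rep_tensor_11_22_word: "rep_tensor (rep11_word G) (rep22_word G p \<chi> j) (delta_word p w) = kQ_Delta (rep22_word G p \<chi> j w :: 'k::field kQ)"
proof (induction w)
  case Nil then show ?case by simp
next
  case (Cons g w)
  then show ?case by (simp add: rep_tensor_mult rep11_word_append rep22_word_append rep_tensor_11_22_gen kQ_Delta_mult)
qed

lemma rep_tensor_22_11_word: "rep_tensor (rep22_word G p \<chi> j) (rep11_word G) (delta_word p w) = kQ_Delta (rep22_word G p \<chi> j w :: 'k::field kQ)"
proof (induction w)
  case Nil then show ?case by simp
next
  case (Cons g w)
  then show ?case by (simp add: rep_tensor_mult rep11_word_append rep22_word_append rep_tensor_22_11_gen kQ_Delta_mult)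
qed

lemma rep_tensor_11_12_word: "1 / of_nat (p j) \<in> G \<Longrightarrow>
  rep_tensor (rep11_word G) (rep12_word G p \<chi> j) (delta_word p w) = kQ_Delta (rep12_word G p \<chi> j w :: 'k::field kQ) * single (1 / of_nat (p j), 0) 1"
proof (induction w)
  case Nil then show ?case by simp
next
  case (Cons g w)
  have "rep_tensor (rep11_word G) (rep12_word G p \<chi> j) (delta_word p (g # w))
     = rep_tensor (rep11_word G) (rep11_word G) (delta_gen p g) * rep_tensor (rep11_word G) (rep12_word G p \<chi> j) (delta_word p w)
     + rep_tensor (rep11_word G) (rep12_word G p \<chi> j) (delta_gen p g) * rep_tensor (rep11_word G) (rep22_word G p \<chi> j) (delta_word p w)"
    by (simp add: rep_tensor_mult_derivation_right[OF rep11_word_append rep12_word_append])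
  also have "\<dots> = kQ_Delta (rep12_word G p \<chi> j (g # w)) * single (1 / of_nat (p j), 0) 1"
    using Cons by (simp add: rep_tensor_11_11_gen rep_tensor_11_12_gen rep_tensor_11_22_word kQ_Delta_mult kQ_Delta_add algebra_simps)
  finally show ?case .
qed

lemma rep_tensor_12_11_word: "rep_tensor (rep12_word G p \<chi> j) (rep11_word G) (delta_word p w) = kQ_Delta (rep12_word G p \<chi> j w :: 'k::field kQ)"
proof (induction w)
  case Nil then show ?case by simp
next
  case (Cons g w)
  have "rep_tensor (rep12_word G p \<chi> j) (rep11_word G) (delta_word p (g # w))
     = rep_tensor (rep11_word G) (rep11_word G) (delta_gen p g) * rep_tensor (rep12_word G p \<chi> j) (rep11_word G) (delta_word p w)
     + rep_tensor (rep12_word G p \<chi> j) (rep11_word G) (delta_gen p g) * rep_tensor (rep22_word G p \<chi> j) (rep11_word G) (delta_word p w)"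
    by (simp add: rep_tensor_mult_derivation_left[OF rep11_word_append rep12_word_append])
  also have "\<dots> = kQ_Delta (rep12_word G p \<chi> j (g # w))"
    using Cons by (simp add: rep_tensor_11_11_gen rep_tensor_12_11_gen rep_tensor_22_11_word kQ_Delta_mult kQ_Delta_add algebra_simps)
  finally show ?case .
qed

lemma rep_tensor_11_11_Delta: "rep_tensor (rep11_word G) (rep11_word G) (B_Delta p f) = kQ_Delta (rep11 G f :: 'k::comm_ring_1 kQ)"
  by (simp add: B_Delta_eq rep_tensor_lin_ext rep_tensor_11_11_word rep11_def kQ_Delta_lin_ext)
lemma rep_tensor_11_12_Delta: "1 / of_nat (p j) \<in> G \<Longrightarrow>
  rep_tensor (rep11_word G) (rep12_word G p \<chi> j) (B_Delta p f) = kQ_Delta (rep12 G p \<chi> j f :: 'k::field kQ) * single (1 / of_nat (p j), 0) 1"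
  by (simp add: B_Delta_eq rep_tensor_lin_ext rep_tensor_11_12_word rep12_def kQ_Delta_lin_ext lin_ext_mult_right)
lemma rep_tensor_12_11_Delta: "rep_tensor (rep12_word G p \<chi> j) (rep11_word G) (B_Delta p f) = kQ_Delta (rep12 G p \<chi> j f :: 'k::field kQ)"
  by (simp add: B_Delta_eq rep_tensor_lin_ext rep_tensor_12_11_word rep12_def kQ_Delta_lin_ext)

context
  fixes G :: "rat set" and I :: "'i set" and p :: "'i \<Rightarrow> nat" and \<chi> :: "rat \<Rightarrow> 'k::field"
  assumes D: "B_data G I p \<chi>"
begin

text \<open>In a commutative target, \<open>x y\<^sub>i = c y\<^sub>i x\<close> with \<open>x = x\<^bsup>1/p\<^sub>i\<^esup>\<close> invertible and \<open>c \<noteq> 1\<close> forces \<open>y\<^sub>i \<mapsto> 0\<close>.\<close>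

lemma character_kills_Y:
  fixes \<rho> :: "('i, 'k) fa \<Rightarrow> 'k kQ"
  assumes i: "i \<in> I"
    and add: "\<And>x y. \<rho> (x + y) = \<rho> x + \<rho> y"
    and sc: "\<And>c x. \<rho> (single 0 c * x) = single 0 c * \<rho> x"
    and mult: "\<And>x y. \<rho> (x * y) = \<rho> x * \<rho> y"
    and one: "\<rho> 1 = 1"
    and kill: "\<And>r. r \<in> B_ideal G I p \<chi> \<Longrightarrow> \<rho> r = 0"
  shows "\<rho> (single [GY i] 1) = 0"
proof -
  have diff: "\<rho> (x - y) = \<rho> x - \<rho> y" for x y
    using add[of "x - y" y] by (simp add: algebra_simps)
  let ?a = "1 / of_nat (p i) :: rat"
  have aG: "?a \<in> G" using B_data_inv_p_mem[OF D i] .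
  have naG: "- ?a \<in> G" using B_data_G_uminus[OF D aG] .
  let ?c = "\<chi> (?a / of_nat (p i))"
  let ?X = "\<rho> (single [GX ?a] 1)" and ?Xn = "\<rho> (single [GX (- ?a)] 1)" and ?Y = "\<rho> (single [GY i] 1)"
  have "\<rho> (single [GX ?a] 1 * single [GY i] 1 - single 0 ?c * (single [GY i] 1 * single [GX ?a] 1)) = 0"
    by (rule kill[OF B_ideal_XY[OF aG i]])
  then have "\<rho> (single [GX ?a] 1 * single [GY i] 1) = \<rho> (single 0 ?c * (single [GY i] 1 * single [GX ?a] 1))"
    by (simp only: diff right_minus_eq)
  then have e1: "?X * ?Y = single 0 ?c * (?Y * ?X)" by (subst (asm) sc, simp only: mult)
  have "\<rho> (single [GX ?a] 1 * single [GX (- ?a)] 1 - single [GX (?a + - ?a)] 1) = 0"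
    by (rule kill[OF B_ideal_XX[OF aG naG]])
  moreover have "\<rho> (single [GX 0] 1 - 1) = 0" by (rule kill[OF B_ideal_X0])
  ultimately have e2: "?X * ?Xn = 1" by (simp only: diff mult one right_minus_eq) simp
  have "(1 - single 0 ?c) * ?Y = (1 - single 0 ?c) * ?Y * (?X * ?Xn)" by (simp add: e2)
  also have "\<dots> = (?X * ?Y - single 0 ?c * (?Y * ?X)) * ?Xn" by (simp add: algebra_simps)
  also have "\<dots> = 0" by (simp add: e1)
  finally have e3: "single 0 (1 - ?c) * ?Y = 0" by (simp add: single_diff)
  have "?c \<noteq> 1" using B_data_chi_ne_1[OF D i] .
  then have inv: "single 0 (inverse (1 - ?c)) * single 0 (1 - ?c) = (1 :: 'k kQ)"
    by (simp add: mult_single)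
  have "?Y = (single 0 (inverse (1 - ?c)) * single 0 (1 - ?c)) * ?Y" by (simp only: inv mult_1_left)
  also have "\<dots> = single 0 (inverse (1 - ?c)) * (single 0 (1 - ?c) * ?Y)" by (rule mult.assoc)
  also have "\<dots> = 0" by (simp only: e3 mult_zero_right)
  finally show ?thesis .
qed

lemma rep11_rep22_word_cases:
  assumes j: "j \<in> I"
  shows "(rep11_word G w = (0::'k kQ) \<and> rep22_word G p \<chi> j w = 0) \<or>
    (\<exists>s\<in>G. rep11_word G w = (single s 1 :: 'k kQ) \<and> rep22_word G p \<chi> j w = single s (inverse (\<chi> (s / of_nat (p j)))))"
proof (induction w)
  case Nil
  have "(1::'k kQ) = single 0 1" by simp
  then show ?case using B_data_G_zero[OF D] B_data_chi_zero[OF D] by (intro disjI2 bexI[of _ 0]) simp_all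
next
  case (Cons g w)
  show ?case
  proof (cases g)
    case (GX a)
    show ?thesis
    proof (cases "a \<in> G")
      case False then show ?thesis using GX by simp
    next
      case True
      from Cons show ?thesis
      proof
        assume "rep11_word G w = (0::'k kQ) \<and> rep22_word G p \<chi> j w = 0" then show ?thesis by simp
      next
        assume "\<exists>s\<in>G. rep11_word G w = (single s 1 :: 'k kQ) \<and> rep22_word G p \<chi> j w = single s (inverse (\<chi> (s / of_nat (p j))))"
        then obtain s where s: "s \<in> G" "rep11_word G w = (single s 1 :: 'k kQ)" "rep22_word G p \<chi> j w = single s (inverse (\<chi> (s / of_nat (p j))))"
          by blast
        have as: "a + s \<in> G" using B_data_G_add[OF D True s(1)] .
        have "\<chi> ((a + s) / of_nat (p j)) = \<chi> (a / of_nat (p j)) * \<chi> (s / of_nat (p j))"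
          using B_data_chi_div_add[OF D j True s(1)] .
        then show ?thesis using GX True s as
          by (intro disjI2 bexI[of _ "a + s"]) (simp_all add: mult_single)
      qed
    qed
  next
    case (GY i) then show ?thesis by simp
  qed
qed

lemma keys_rep11_word: "keys (rep11_word G w :: 'k kQ) \<subseteq> G"
proof (induction w)
  case Nil then show ?case using B_data_G_zero[OF D] by (simp add: one_poly_mapping_def[symmetric] flip: single_one)
next
  case (Cons g w)
  show ?case
  proof (cases g)
    case (GX a)
    show ?thesis
    proof (cases "a \<in> G")
      case False then show ?thesis using GX by simp
    next
      case True
      have "keys (single a 1 * rep11_word G w :: 'k kQ) \<subseteq> {a + s | s. s \<in> keys (rep11_word G w :: 'k kQ)}"
        by (rule order_trans[OF keys_mult]) auto
      also have "\<dots> \<subseteq> G" using Cons True B_data_G_add[OF D] by blast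
      finally show ?thesis using GX True by simp
    qed
  next
    case (GY i) then show ?thesis by simp
  qed
qed

lemma keys_rep11: "keys (rep11 G f :: 'k kQ) \<subseteq> G"
  unfolding rep11_def by (rule keys_lin_ext_subset) (rule keys_rep11_word)

definition chi_twist :: "'i \<Rightarrow> 'k kQ \<Rightarrow> 'k kQ" where
  "chi_twist j = lin_ext (\<lambda>b. single b (inverse (\<chi> (b / of_nat (p j)))))"

lemma chi_twist_single: "chi_twist j (single b c) = single b (c * inverse (\<chi> (b / of_nat (p j))))"
  by (simp add: chi_twist_def mult_single)

lemma rep22_eq_chi_twist: assumes j: "j \<in> I" shows "rep22 G p \<chi> j f = chi_twist j (rep11 G f)"
proof -
  have h: "rep22_word G p \<chi> j w = chi_twist j (rep11_word G w)" for w
    using rep11_rep22_word_cases[OF j, of w] by (auto simp: chi_twist_def)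
  have "lin_ext (rep22_word G p \<chi> j) f = lin_ext (\<lambda>w. chi_twist j (rep11_word G w)) f"
    by (rule lin_ext_cong) (rule h)
  then show ?thesis by (simp add: rep22_def rep11_def chi_twist_def lin_ext_compose)
qed

lemma B_eps_eq_kQ_eps:
  fixes f :: "('i,'k) fa"
  shows "B_eps G f = kQ_eps (rep11 G f)"
proof -
  have m: "lin_ext (\<lambda>_. 1) (x * y) = lin_ext (\<lambda>_. 1) x * (lin_ext (\<lambda>_. 1) y :: 'k kQ)" for x y :: "'k kQ"
    by (rule lin_ext_mult) simp
  have w: "lin_ext (\<lambda>_. 1) (rep11_word G w) = (single 0 (eps_word G w) :: 'k kQ)" for w :: "'i gen list"
  proof (induction w)
    case Nil then show ?case by (simp add: eps_word_def one_poly_mapping_def[symmetric] flip: single_one)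
  next
    case (Cons g w)
    then show ?case by (cases g) (simp_all add: m eps_word_def mult_single)
  qed
  have "lin_ext (\<lambda>w. single 0 (eps_word G w)) f = lin_ext (\<lambda>w. lin_ext (\<lambda>_. 1 :: 'k kQ) (rep11_word G w)) f"
    by (rule lin_ext_cong) (simp add: w)
  then show ?thesis
    by (simp add: B_eps_eq kQ_eps_def rep11_def lin_ext_compose)
qed

end

section \<open>Normal forms modulo two \<open>y\<close>'s\<close>

text \<open>\<open>(b, None)\<close> encodes \<open>x\<^sup>b\<close> and \<open>(b, Some j)\<close> encodes \<open>x\<^sup>b y\<^sub>j\<close>. Modulo the defining ideal and
  \<open>Y2_span\<close>, the span of the words with at least two \<open>y\<close>'s, every element is a combination
  of these, and \<open>rep11\<close> and \<open>rep12\<close> read off the coefficients.\<close>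

fun nf_word :: "rat \<times> 'i option \<Rightarrow> ('i,'k::comm_ring_1) fa" where
  "nf_word (b, None) = single [GX b] 1"
| "nf_word (b, Some j) = single [GX b, GY j] 1"

fun is_Y :: "'i gen \<Rightarrow> bool" where
  "is_Y (GX a) = False" | "is_Y (GY i) = True"

definition count_Y :: "'i gen list \<Rightarrow> nat" where "count_Y w = length (filter is_Y w)"

lemma count_Y_simps [simp]: "count_Y [] = 0" "count_Y (GX a # w) = count_Y w" "count_Y (GY i # w) = Suc (count_Y w)"
  "count_Y (u @ v) = count_Y u + count_Y v"
  by (simp_all add: count_Y_def)

definition Y2_span :: "('i,'k::comm_ring_1) fa set" where "Y2_span = {t. \<forall>w\<in>keys t. 2 \<le> count_Y w}"

lemma Y2_span_zero: "0 \<in> Y2_span" by (simp add: Y2_span_def)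
lemma Y2_span_add: "a \<in> Y2_span \<Longrightarrow> b \<in> Y2_span \<Longrightarrow> a + b \<in> Y2_span"
proof -
  assume a: "a \<in> Y2_span" and b: "b \<in> Y2_span"
  show ?thesis
  proof (unfold Y2_span_def, intro CollectI ballI)
    fix w assume "w \<in> keys (a + b)"
    then have "w \<in> keys a \<or> w \<in> keys b" using keys_add by fast
    then show "2 \<le> count_Y w" using a b unfolding Y2_span_def by blast
  qed
qed
lemma Y2_span_mult_left: "t \<in> Y2_span \<Longrightarrow> x * t \<in> Y2_span"
proof -
  assume t: "t \<in> Y2_span"
  show ?thesis
  proof (unfold Y2_span_def, intro CollectI ballI)
    fix w assume "w \<in> keys (x * t)"
    then obtain u v where uv: "w = u @ v" "v \<in> keys t" using keys_mult[of x t] by auto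
    have "2 \<le> count_Y v" using t uv(2) unfolding Y2_span_def by blast
    then show "2 \<le> count_Y w" using uv by simp
  qed
qed
lemma Y2_span_single: "2 \<le> count_Y w \<Longrightarrow> single w c \<in> Y2_span"
  by (simp add: Y2_span_def)
lemma count_Y_pos: "1 \<le> count_Y w \<Longrightarrow> \<exists>i. GY i \<in> set w"
proof (induction w)
  case Nil then show ?case by simp
next
  case (Cons g w)
  then show ?case by (cases g) auto
qed

lemma rep12_word_count_Y: "2 \<le> count_Y w \<Longrightarrow> rep12_word G p \<chi> j w = 0"
proof (induction w)
  case Nil then show ?case by simp
next
  case (Cons g w)
  show ?case
  proof (cases g)
    case (GX a) with Cons show ?thesis by simp
  next
    case (GY i)
    then have "1 \<le> count_Y w" using Cons.prems by simp
    then obtain k where "GY k \<in> set w" using count_Y_pos by blast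
    then show ?thesis using GY by (simp add: rep22_word_Y)
  qed
qed

lemma rep11_Y2_span: "t \<in> Y2_span \<Longrightarrow> rep11 G t = 0"
  unfolding rep11_def
proof (rule lin_ext_zero_fun)
  fix w assume "t \<in> Y2_span" "w \<in> keys t"
  then have "1 \<le> count_Y w" unfolding Y2_span_def by fastforce
  then obtain i where "GY i \<in> set w" using count_Y_pos by blast
  then show "rep11_word G w = 0" by (rule rep11_word_Y)
qed

lemma rep12_Y2_span: "t \<in> Y2_span \<Longrightarrow> rep12 G p \<chi> j t = 0"
  unfolding rep12_def Y2_span_def
  by (rule lin_ext_zero_fun) (simp add: rep12_word_count_Y)

lemma lookup_rep11_lin_ext_nf_word:
  assumes "\<forall>w\<in>keys \<nu>. fst w \<in> G"
  shows "lookup (rep11 G (lin_ext nf_word \<nu>) :: 'k::comm_ring_1 kQ) b = lookup \<nu> (b, None)"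
proof -
  have w: "lookup (lin_ext (rep11_word G) (nf_word w) :: 'k kQ) b = (if w = (b, None) then 1 else 0)"
    if "w \<in> keys \<nu>" for w
    using assms that by (cases w, rename_tac b' oo, case_tac oo) (auto simp: lookup_single when_def)
  show ?thesis
    unfolding rep11_def lin_ext_compose by (subst lookup_lin_ext) (simp add: w sum_lookup_indicator cong: sum.cong)
qed

lemma lookup_rep12_lin_ext_nf_word:
  assumes "\<forall>w\<in>keys \<nu>. fst w \<in> G"
  shows "lookup (rep12 G p \<chi> j (lin_ext nf_word \<nu>) :: 'k::field kQ) b = lookup \<nu> (b, Some j)"
proof -
  have w: "lookup (lin_ext (rep12_word G p \<chi> j) (nf_word w) :: 'k kQ) b = (if w = (b, Some j) then 1 else 0)"
    if "w \<in> keys \<nu>" for w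
    using assms that by (cases w, rename_tac b' oo, case_tac oo) (auto simp: lookup_single when_def)
  show ?thesis
    unfolding rep12_def lin_ext_compose by (subst lookup_lin_ext) (simp add: w sum_lookup_indicator cong: sum.cong)
qed

context
  fixes G :: "rat set" and I :: "'i set" and p :: "'i \<Rightarrow> nat" and \<chi> :: "rat \<Rightarrow> 'k::field"
  assumes D: "B_data G I p \<chi>"
begin

definition nf_index :: "(rat \<times> 'i option) \<Rightarrow> bool" where
  "nf_index bo \<longleftrightarrow> fst bo \<in> G \<and> (\<forall>j. snd bo = Some j \<longrightarrow> j \<in> I)"

definition has_nf :: "('i,'k) fa \<Rightarrow> bool" where
  "has_nf f \<longleftrightarrow> (\<exists>\<nu> t r. (\<forall>bo\<in>keys \<nu>. nf_index bo) \<and> t \<in> Y2_span \<and> r \<in> B_ideal G I p \<chi> \<and>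
       f = lin_ext nf_word \<nu> + t + r)"

lemma has_nf_zero: "has_nf 0"
  unfolding has_nf_def
  by (rule exI[of _ 0], rule exI[of _ 0], rule exI[of _ 0]) (simp add: Y2_span_zero B_ideal_def fa_ideal.zero)

lemma has_nf_add: "has_nf f \<Longrightarrow> has_nf g \<Longrightarrow> has_nf (f + g)"
proof -
  assume f: "has_nf f" and g: "has_nf g"
  obtain \<nu> t r where a: "\<forall>bo\<in>keys \<nu>. nf_index bo" "t \<in> Y2_span" "r \<in> B_ideal G I p \<chi>" "f = lin_ext nf_word \<nu> + t + r"
    using f unfolding has_nf_def by blast
  obtain \<nu>' t' r' where b: "\<forall>bo\<in>keys \<nu>'. nf_index bo" "t' \<in> Y2_span" "r' \<in> B_ideal G I p \<chi>" "g = lin_ext nf_word \<nu>' + t' + r'"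
    using g unfolding has_nf_def by blast
  have v: "\<forall>bo\<in>keys (\<nu> + \<nu>'). nf_index bo"
  proof
    fix bo assume "bo \<in> keys (\<nu> + \<nu>')"
    then have "bo \<in> keys \<nu> \<or> bo \<in> keys \<nu>'" using keys_add by fast
    then show "nf_index bo" using a(1) b(1) by blast
  qed
  have "t + t' \<in> Y2_span" using a(2) b(2) by (rule Y2_span_add)
  moreover have "r + r' \<in> B_ideal G I p \<chi>" using a(3) b(3) unfolding B_ideal_def by (rule fa_ideal.add)
  moreover have "f + g = lin_ext nf_word (\<nu> + \<nu>') + (t + t') + (r + r')" using a(4) b(4) by (simp add: lin_ext_add algebra_simps)
  ultimately show ?thesis unfolding has_nf_def using v by blast
qed

lemma has_nf_add_ideal: "has_nf f \<Longrightarrow> r' \<in> B_ideal G I p \<chi> \<Longrightarrow> has_nf (f + r')"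
proof -
  assume "has_nf f" and r': "r' \<in> B_ideal G I p \<chi>"
  then obtain \<nu> t r where a: "\<forall>bo\<in>keys \<nu>. nf_index bo" "t \<in> Y2_span" "r \<in> B_ideal G I p \<chi>" "f = lin_ext nf_word \<nu> + t + r"
    unfolding has_nf_def by blast
  show ?thesis unfolding has_nf_def
    by (rule exI[of _ \<nu>], rule exI[of _ t], rule exI[of _ "r + r'"])
      (use a r' in \<open>simp add: B_ideal_def fa_ideal.add algebra_simps\<close>)
qed

lemma has_nf_add_Y2: "has_nf f \<Longrightarrow> t' \<in> Y2_span \<Longrightarrow> has_nf (f + t')"
proof -
  assume "has_nf f" and t': "t' \<in> Y2_span"
  then obtain \<nu> t r where a: "\<forall>bo\<in>keys \<nu>. nf_index bo" "t \<in> Y2_span" "r \<in> B_ideal G I p \<chi>" "f = lin_ext nf_word \<nu> + t + r"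
    unfolding has_nf_def by blast
  show ?thesis unfolding has_nf_def
    by (rule exI[of _ \<nu>], rule exI[of _ "t + t'"], rule exI[of _ r])
      (use a t' in \<open>simp add: Y2_span_add algebra_simps\<close>)
qed

lemma has_nf_sum: "(\<And>i. i \<in> A \<Longrightarrow> has_nf (g i)) \<Longrightarrow> has_nf (\<Sum>i\<in>A. g i)"
  by (induction A rule: infinite_finite_induct) (simp_all add: has_nf_zero has_nf_add)

lemma has_nf_nf_word: "nf_index bo \<Longrightarrow> has_nf (single 0 c * nf_word bo)"
  unfolding has_nf_def
  by (rule exI[of _ "single bo c"], rule exI[of _ 0], rule exI[of _ 0])
     (simp add: Y2_span_zero B_ideal_def fa_ideal.zero)

lemma has_nf_scale: "has_nf f \<Longrightarrow> has_nf (single 0 c * f)"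
proof -
  assume "has_nf f"
  then obtain \<nu> t r where a: "\<forall>bo\<in>keys \<nu>. nf_index bo" "t \<in> Y2_span" "r \<in> B_ideal G I p \<chi>" "f = lin_ext nf_word \<nu> + t + r"
    unfolding has_nf_def by blast
  have e: "single 0 c * lin_ext nf_word \<nu> = (\<Sum>w\<in>keys \<nu>. single 0 (c * lookup \<nu> w) * nf_word w)"
    by (simp add: lin_ext_def sum_distrib_left mult.assoc[symmetric] single_zero_mult)
  have "has_nf (single 0 c * lin_ext nf_word \<nu>)"
    unfolding e by (rule has_nf_sum) (use a(1) has_nf_nf_word in blast)
  then have "has_nf (single 0 c * lin_ext nf_word \<nu> + single 0 c * t)"
    by (rule has_nf_add_Y2) (rule Y2_span_mult_left[OF a(2)])
  then have "has_nf (single 0 c * lin_ext nf_word \<nu> + single 0 c * t + single 0 c * r)"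
    by (rule has_nf_add_ideal) (use a(3) in \<open>simp add: B_ideal_def fa_ideal_mult_left\<close>)
  then show ?thesis by (simp add: a(4) distrib_left)
qed

lemma has_nf_lin_ext: "(\<And>w. w \<in> keys f \<Longrightarrow> has_nf (P w)) \<Longrightarrow> has_nf (lin_ext P f)"
  unfolding lin_ext_def by (rule has_nf_sum) (simp add: has_nf_scale)

lemma has_nf_ideal: "r \<in> B_ideal G I p \<chi> \<Longrightarrow> has_nf r"
  using has_nf_add_ideal[OF has_nf_zero] by simp

lemma has_nf_diff_ideal: "has_nf f \<Longrightarrow> f - g \<in> B_ideal G I p \<chi> \<Longrightarrow> has_nf g"
proof -
  assume f: "has_nf f" and fg: "f - g \<in> B_ideal G I p \<chi>"
  have "- (f - g) \<in> B_ideal G I p \<chi>" using fg unfolding B_ideal_def by (rule fa_ideal_uminus)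
  then have "g - f \<in> B_ideal G I p \<chi>" by simp
  then have "has_nf (f + (g - f))" by (rule has_nf_add_ideal[OF f])
  then show ?thesis by simp
qed

lemma has_nf_cong: "has_nf f \<Longrightarrow> g - f \<in> B_ideal G I p \<chi> \<Longrightarrow> has_nf g"
  using has_nf_add_ideal[of f "g - f"] by simp

lemma has_nf_X_nf_word:
  assumes a: "a \<in> G" and v: "nf_index (b, oo)"
  shows "has_nf (single [GX a] 1 * nf_word (b, oo))"
proof -
  have bG: "b \<in> G" using v by (simp add: nf_index_def)
  have ab: "nf_index (a + b, oo)" using v B_data_G_add[OF D a bG] by (simp add: nf_index_def)
  let ?y = "case oo of None \<Rightarrow> 1 | Some j \<Rightarrow> single [GY j] 1"
  have "(single [GX a] 1 * single [GX b] 1 - single [GX (a + b)] 1) * ?y \<in> B_ideal G I p \<chi>"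
    using B_ideal_XX[OF a bG] unfolding B_ideal_def by (rule fa_ideal_mult_right)
  moreover have "single [GX a] 1 * nf_word (b, oo) - single 0 1 * nf_word (a + b, oo)
      = (single [GX a] 1 * single [GX b] 1 - single [GX (a + b)] 1) * ?y"
    by (cases oo) (simp_all add: mult_single left_diff_distrib)
  ultimately show ?thesis using has_nf_nf_word[OF ab] by (metis has_nf_cong)
qed

lemma has_nf_Y_nf_word:
  assumes i: "i \<in> I" and v: "nf_index (b, oo)"
  shows "has_nf (single [GY i] 1 * nf_word (b, oo))"
proof (cases oo)
  case (Some j)
  then have "single [GY i] 1 * nf_word (b, oo) \<in> Y2_span" by (simp add: mult_single Y2_span_single)
  then show ?thesis using has_nf_add_Y2[OF has_nf_zero] by simp
next
  case None
  have bG: "b \<in> G" using v by (simp add: nf_index_def)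
  let ?c = "\<chi> (b / of_nat (p i))"
  have nz: "?c \<noteq> 0" using B_data_chi_nonzero[OF D GM_mem[OF i bG]] .
  let ?r = "single [GX b] 1 * single [GY i] 1 - single 0 ?c * (single [GY i] 1 * single [GX b] 1)"
  have "single 0 (- inverse ?c) * ?r \<in> B_ideal G I p \<chi>"
    using B_ideal_XY[OF bG i] unfolding B_ideal_def by (rule fa_ideal_mult_left)
  moreover have "single [GY i] 1 * nf_word (b, oo) - single 0 (inverse ?c) * nf_word (b, Some i)
      = single 0 (- inverse ?c) * ?r"
    using None nz by (simp add: mult_single right_diff_distrib single_uminus)
  moreover have "has_nf (single 0 (inverse ?c) * nf_word (b, Some i))"
    by (rule has_nf_nf_word) (simp add: nf_index_def bG i)
  ultimately show ?thesis by (metis has_nf_cong)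
qed

lemma has_nf_letter_nf_word:
  assumes "nf_index bo"
  shows "has_nf (single [g] 1 * nf_word bo)"
proof -
  obtain b oo where bo: "bo = (b, oo)" by fastforce
  have v: "nf_index (b, oo)" using assms bo by simp
  consider (X) a where "g = GX a" "a \<in> G" | (Y) i where "g = GY i" "i \<in> I" | (outside) "single [g] (1::'k) \<in> B_ideal G I p \<chi>"
    by (rule letter_cases)
  then show ?thesis
  proof cases
    case outside
    then have "single [g] 1 * nf_word bo \<in> B_ideal G I p \<chi>"
      unfolding B_ideal_def by (rule fa_ideal_mult_right)
    then show ?thesis by (rule has_nf_ideal)
  qed (use bo v has_nf_X_nf_word has_nf_Y_nf_word in simp_all)
qed

lemma has_nf_single: "has_nf (single w 1)"
proof (induction w)
  case Nil
  have "has_nf (single 0 1 * nf_word (0, None))" by (rule has_nf_nf_word) (simp add: nf_index_def B_data_G_zero[OF D])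
  then show ?case
    by (rule has_nf_diff_ideal) (use B_ideal_X0 in simp)
next
  case (Cons g w)
  then obtain \<nu> t r where a: "\<forall>bo\<in>keys \<nu>. nf_index bo" "t \<in> Y2_span" "r \<in> B_ideal G I p \<chi>" "single w 1 = lin_ext nf_word \<nu> + t + r"
    unfolding has_nf_def by blast
  have e: "single (g # w) 1 = single [g] 1 * lin_ext nf_word \<nu> + single [g] 1 * t + single [g] 1 * r"
    by (simp add: mult_single flip: a(4) distrib_left)
  have "has_nf (single [g] 1 * lin_ext nf_word \<nu>)"
    unfolding lin_ext_mult_left by (rule has_nf_lin_ext) (use a(1) has_nf_letter_nf_word in blast)
  then have "has_nf (single [g] 1 * lin_ext nf_word \<nu> + single [g] 1 * t)"
    by (rule has_nf_add_Y2) (rule Y2_span_mult_left[OF a(2)])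
  then have "has_nf (single [g] 1 * lin_ext nf_word \<nu> + single [g] 1 * t + single [g] 1 * r)"
    by (rule has_nf_add_ideal) (use a(3) in \<open>simp add: B_ideal_def fa_ideal_mult_left\<close>)
  then show ?case by (simp only: e)
qed

lemma has_nf_all: "has_nf f"
proof (induction f rule: poly_mapping_induct)
  case zero then show ?case by (rule has_nf_zero)
next
  case (single_add w c f)
  have "has_nf (single 0 c * single w 1)" by (rule has_nf_scale[OF has_nf_single])
  then show ?case using has_nf_add single_add by (simp add: mult_single)
qed

lemma reps_kernel_decomp:
  assumes rep11_0: "rep11 G f = 0" and rep12_0: "\<And>k. k \<in> I \<Longrightarrow> rep12 G p \<chi> k f = 0"
  shows "\<exists>t r. t \<in> Y2_span \<and> r \<in> B_ideal G I p \<chi> \<and> f = t + r"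
proof -
  obtain \<nu> t r where nf: "\<forall>bo\<in>keys \<nu>. nf_index bo" "t \<in> Y2_span" "r \<in> B_ideal G I p \<chi>"
    "f = lin_ext nf_word \<nu> + t + r"
    using has_nf_all[of f] unfolding has_nf_def by blast
  have G: "\<forall>bo\<in>keys \<nu>. fst bo \<in> G" using nf(1) by (simp add: nf_index_def)
  have "lookup \<nu> (b, oo) = 0" for b oo
  proof (cases oo)
    case None
    have "rep11 G (lin_ext nf_word \<nu>) = 0"
      using rep11_0 reps_kill_B_ideal[OF D nf(3)] B_data_two_indices[OF D] rep11_Y2_span[OF nf(2)]
      by (auto simp: nf(4) rep11_add)
    then show ?thesis using lookup_rep11_lin_ext_nf_word[OF G, of b] None by simp
  next
    case (Some j)
    show ?thesis
    proof (cases "j \<in> I")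
      case True
      have "rep12 G p \<chi> j (lin_ext nf_word \<nu>) = 0"
        using rep12_0[OF True] reps_kill_B_ideal[OF D nf(3) True] rep12_Y2_span[OF nf(2)]
        by (simp add: nf(4) rep12_add)
      then show ?thesis using lookup_rep12_lin_ext_nf_word[OF G, of p \<chi> j b] Some by simp
    next
      case False
      then have "(b, oo) \<notin> keys \<nu>" using nf(1) Some by (auto simp: nf_index_def)
      then show ?thesis by (simp add: in_keys_iff)
    qed
  qed
  then have "\<nu> = 0" by (intro poly_mapping_eqI) (metis lookup_zero surj_pair)
  then show ?thesis using nf by auto
qed

end

section \<open>Isomorphisms determine the data\<close>

locale alg_iso =
  fixes G :: "rat set" and I :: "'i set" and p :: "'i \<Rightarrow> nat" and \<chi> :: "rat \<Rightarrow> 'k::field"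
    and G' :: "rat set" and I' :: "'j set" and p' :: "'j \<Rightarrow> nat" and \<chi>' :: "rat \<Rightarrow> 'k"
    and \<phi> :: "('i, 'k) fa \<Rightarrow> ('j, 'k) fa"
  assumes D: "B_data G I p \<chi>" and D': "B_data G' I' p' \<chi>'"
    and phi_add: "\<And>f g. \<phi> (f + g) = \<phi> f + \<phi> g"
    and phi_scale: "\<And>c f. \<phi> (single 0 c * f) = single 0 c * \<phi> f"
    and phi_B_ideal_iff: "\<And>f. f \<in> B_ideal G I p \<chi> \<longleftrightarrow> \<phi> f \<in> B_ideal G' I' p' \<chi>'"
    and phi_surj: "\<And>g. \<exists>f. g - \<phi> f \<in> B_ideal G' I' p' \<chi>'"
    and phi_mult: "\<And>f g. \<phi> (f * g) - \<phi> f * \<phi> g \<in> B_ideal G' I' p' \<chi>'"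
    and phi_one: "\<phi> 1 - 1 \<in> B_ideal G' I' p' \<chi>'"
begin

abbreviation "R \<equiv> B_ideal G I p \<chi>"
abbreviation "R' \<equiv> B_ideal G' I' p' \<chi>'"

lemma phi_zero: "\<phi> 0 = 0" using phi_add[of 0 0] by simp
lemma phi_diff: "\<phi> (f - g) = \<phi> f - \<phi> g" using phi_add[of "f - g" g] by (simp add: algebra_simps)
lemma phi_lin_ext: "\<phi> (lin_ext P f) = lin_ext (\<lambda>w. \<phi> (P w)) f"
proof (induction f rule: poly_mapping_induct)
  case zero then show ?case by (simp add: phi_zero)
next
  case (single_add w c f)
  then show ?case by (simp add: lin_ext_add phi_add phi_scale)
qed
lemma phi_expand: "\<phi> f = lin_ext (\<lambda>w. \<phi> (single w 1)) f"
  using phi_lin_ext[of "\<lambda>w. single w 1" f] by (simp add: lin_ext_single_id)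

lemma phi_R: "f \<in> R \<Longrightarrow> \<phi> f \<in> R'" using phi_B_ideal_iff by blast

lemma R'_add: "x \<in> R' \<Longrightarrow> y \<in> R' \<Longrightarrow> x + y \<in> R'" unfolding B_ideal_def by (rule fa_ideal.add)
lemma R'_diff: "x \<in> R' \<Longrightarrow> y \<in> R' \<Longrightarrow> x - y \<in> R'" unfolding B_ideal_def by (rule fa_ideal_diff)
lemma R'_mult_left: "x \<in> R' \<Longrightarrow> u * x \<in> R'" unfolding B_ideal_def by (rule fa_ideal_mult_left)
lemma R'_mult_right: "x \<in> R' \<Longrightarrow> x * u \<in> R'" unfolding B_ideal_def by (rule fa_ideal_mult_right)

lemma rep11_R': "r \<in> R' \<Longrightarrow> rep11 G' r = 0" using reps_kill_B_ideal[OF D'] B_data_two_indices[OF D'] by blast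
lemma rep22_R': "r \<in> R' \<Longrightarrow> j \<in> I' \<Longrightarrow> rep22 G' p' \<chi>' j r = 0" using reps_kill_B_ideal[OF D'] by blast
lemma rep12_R': "r \<in> R' \<Longrightarrow> j \<in> I' \<Longrightarrow> rep12 G' p' \<chi>' j r = 0" using reps_kill_B_ideal[OF D'] by blast

lemma rep11_phi_R: "x \<in> R \<Longrightarrow> rep11 G' (\<phi> x) = 0"
  using rep11_R'[OF phi_R] .
lemma rep12_phi_R: "j \<in> I' \<Longrightarrow> x \<in> R \<Longrightarrow> rep12 G' p' \<chi>' j (\<phi> x) = 0"
  using rep12_R'[OF phi_R] by blast
lemma rep11_phi_cong: "x - y \<in> R \<Longrightarrow> rep11 G' (\<phi> x) = rep11 G' (\<phi> y)"
  using rep11_phi_R[of "x - y"] by (simp add: phi_diff rep11_diff)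

lemma rep11_phi_mult: "rep11 G' (\<phi> (f * g)) = rep11 G' (\<phi> f) * rep11 G' (\<phi> g)"
  using rep11_R'[OF phi_mult[of f g]] by (simp add: rep11_diff rep11_mult)
lemma rep11_phi_one: "rep11 G' (\<phi> 1) = 1"
  using rep11_R'[OF phi_one] by (simp add: rep11_diff)
lemma rep22_phi_mult: "j \<in> I' \<Longrightarrow> rep22 G' p' \<chi>' j (\<phi> (f * g)) = rep22 G' p' \<chi>' j (\<phi> f) * rep22 G' p' \<chi>' j (\<phi> g)"
  using rep22_R'[OF phi_mult[of f g]] by (simp add: rep22_diff rep22_mult)
lemma rep22_phi_one: "j \<in> I' \<Longrightarrow> rep22 G' p' \<chi>' j (\<phi> 1) = 1"
  using rep22_R'[OF phi_one] by (simp add: rep22_diff)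
lemma rep12_phi_mult: "j \<in> I' \<Longrightarrow> rep12 G' p' \<chi>' j (\<phi> (f * g))
   = rep11 G' (\<phi> f) * rep12 G' p' \<chi>' j (\<phi> g) + rep12 G' p' \<chi>' j (\<phi> f) * rep22 G' p' \<chi>' j (\<phi> g)"
  using rep12_R'[OF phi_mult[of f g]] by (simp add: rep12_diff rep12_mult)
lemma rep12_phi_one: "j \<in> I' \<Longrightarrow> rep12 G' p' \<chi>' j (\<phi> 1) = 0"
  using rep12_R'[OF phi_one] by (simp add: rep12_diff)

lemma rep11_phi_Y: "rep11 G' (\<phi> (single [GY i] 1)) = 0"
proof (cases "i \<in> I")
  case True
  show ?thesis
    by (rule character_kills_Y[OF D True, where \<rho> = "\<lambda>f. rep11 G' (\<phi> f)"])
      (simp_all add: phi_add rep11_add phi_scale rep11_scale rep11_phi_mult rep11_phi_one rep11_phi_R)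
qed (simp add: rep11_phi_R B_ideal_Y_outside)

lemma rep22_phi_Y: "j \<in> I' \<Longrightarrow> rep22 G' p' \<chi>' j (\<phi> (single [GY i] 1)) = 0"
proof (cases "i \<in> I")
  case True
  assume j: "j \<in> I'"
  show ?thesis
    by (rule character_kills_Y[OF D True, where \<rho> = "\<lambda>f. rep22 G' p' \<chi>' j (\<phi> f)"])
      (simp_all add: j phi_add rep22_add phi_scale rep22_scale rep22_phi_mult rep22_phi_one rep22_R' phi_R)
qed (simp add: rep22_R' phi_R B_ideal_Y_outside)

lemma reps_phi_word:
  assumes j: "j \<in> I'"
  shows "(1 \<le> count_Y w \<longrightarrow> rep11 G' (\<phi> (single w 1)) = 0 \<and> rep22 G' p' \<chi>' j (\<phi> (single w 1)) = 0)
       \<and> (2 \<le> count_Y w \<longrightarrow> rep12 G' p' \<chi>' j (\<phi> (single w 1)) = 0)"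
proof (induction w)
  case (Cons g w)
  have e: "rep11 G' (\<phi> (single (g # w) 1)) = rep11 G' (\<phi> (single [g] 1)) * rep11 G' (\<phi> (single w 1))"
    "rep22 G' p' \<chi>' j (\<phi> (single (g # w) 1)) = rep22 G' p' \<chi>' j (\<phi> (single [g] 1)) * rep22 G' p' \<chi>' j (\<phi> (single w 1))"
    "rep12 G' p' \<chi>' j (\<phi> (single (g # w) 1)) = rep11 G' (\<phi> (single [g] 1)) * rep12 G' p' \<chi>' j (\<phi> (single w 1))
      + rep12 G' p' \<chi>' j (\<phi> (single [g] 1)) * rep22 G' p' \<chi>' j (\<phi> (single w 1))"
    by (simp_all only: single_Cons_mult[of g w] rep11_phi_mult rep22_phi_mult[OF j] rep12_phi_mult[OF j])
  show ?case
  proof (cases g)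
    case (GX a)
    then show ?thesis using Cons e by simp
  next
    case (GY i)
    have "rep11 G' (\<phi> (single [g] 1)) = 0" "rep22 G' p' \<chi>' j (\<phi> (single [g] 1)) = 0"
      using rep11_phi_Y rep22_phi_Y[OF j] GY by auto
    then show ?thesis using Cons e GY by auto
  qed
qed simp

definition phi_inv :: "('j, 'k) fa \<Rightarrow> ('i, 'k) fa" where
  "phi_inv = lin_ext (\<lambda>w. SOME f. single w 1 - \<phi> f \<in> R')"

lemma phi_inv_add: "phi_inv (x + y) = phi_inv x + phi_inv y" by (simp add: phi_inv_def lin_ext_add)
lemma phi_inv_scale: "phi_inv (single 0 c * x) = single 0 c * phi_inv x" by (simp add: phi_inv_def lin_ext_scale)

lemma phi_phi_inv: "g - \<phi> (phi_inv g) \<in> R'"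
proof -
  have s: "single w 1 - \<phi> (SOME f. single w 1 - \<phi> f \<in> R') \<in> R'" for w :: "'j gen list"
    by (rule someI_ex) (rule phi_surj)
  have "g - \<phi> (phi_inv g) = lin_ext (\<lambda>w. single w 1 - \<phi> (SOME f. single w 1 - \<phi> f \<in> R')) g"
    by (simp add: phi_inv_def phi_lin_ext lin_ext_single_id lin_ext_diff_fun[symmetric])
  also have "\<dots> \<in> R'" unfolding B_ideal_def by (rule fa_ideal_lin_ext) (use s in \<open>simp add: B_ideal_def\<close>)
  finally show ?thesis .
qed

lemma phi_inv_phi: "f - phi_inv (\<phi> f) \<in> R"
  using phi_phi_inv[of "\<phi> f"] phi_B_ideal_iff[of "f - phi_inv (\<phi> f)"] by (simp add: phi_diff)

lemma phi_inv_B_ideal_iff: "x \<in> R' \<longleftrightarrow> phi_inv x \<in> R"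
proof
  assume "x \<in> R'"
  then have "x - (x - \<phi> (phi_inv x)) \<in> R'" by (rule R'_diff[OF _ phi_phi_inv])
  then show "phi_inv x \<in> R" using phi_B_ideal_iff by simp
next
  assume "phi_inv x \<in> R"
  then have "(x - \<phi> (phi_inv x)) + \<phi> (phi_inv x) \<in> R'" by (rule R'_add[OF phi_phi_inv phi_R])
  then show "x \<in> R'" by (simp only: diff_add_cancel)
qed

lemma phi_inv_mult: "phi_inv (x * y) - phi_inv x * phi_inv y \<in> R"
proof -
  let ?a = "\<phi> (phi_inv x)" and ?b = "\<phi> (phi_inv y)"
  have "\<phi> (phi_inv (x * y) - phi_inv x * phi_inv y)
     = (\<phi> (phi_inv (x * y)) - x * y) - (\<phi> (phi_inv x * phi_inv y) - ?a * ?b) - ((?a - x) * ?b + x * (?b - y))"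
    by (simp add: phi_diff algebra_simps)
  also have "\<dots> \<in> R'"
  proof (rule R'_diff[OF R'_diff R'_add])
    show "\<phi> (phi_inv (x * y)) - x * y \<in> R'"
      using R'_mult_left[OF phi_phi_inv[of "x * y"], of "-1"] by simp
    show "\<phi> (phi_inv x * phi_inv y) - ?a * ?b \<in> R'" by (rule phi_mult)
    show "(?a - x) * ?b \<in> R'" using R'_mult_left[OF phi_phi_inv[of x], of "-1"] by (intro R'_mult_right) simp
    show "x * (?b - y) \<in> R'" using R'_mult_left[OF phi_phi_inv[of y], of "-1"] by (intro R'_mult_left) simp
  qed
  finally show ?thesis using phi_B_ideal_iff by blast
qed

lemma phi_inv_one: "phi_inv 1 - 1 \<in> R"
proof -
  have "\<phi> (phi_inv 1 - 1) = (\<phi> (phi_inv 1) - 1) - (\<phi> 1 - 1)" by (simp add: phi_diff)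
  also have "\<dots> \<in> R'"
    by (rule R'_diff[OF _ phi_one]) (use R'_mult_left[OF phi_phi_inv[of 1], of "-1"] in simp)
  finally show ?thesis using phi_B_ideal_iff by blast
qed

lemma alg_iso_phi_inv: "alg_iso G' I' p' \<chi>' G I p \<chi> phi_inv"
proof unfold_locales
  show "\<exists>g. f - phi_inv g \<in> R" for f using phi_inv_phi by blast
qed (fact D D' phi_inv_add phi_inv_scale phi_inv_B_ideal_iff phi_inv_mult phi_inv_one)+

end

locale hopf_iso =
  fixes G :: "rat set" and I :: "'i set" and p :: "'i \<Rightarrow> nat" and \<chi> :: "rat \<Rightarrow> 'k::field"
    and G' :: "rat set" and I' :: "'j set" and p' :: "'j \<Rightarrow> nat" and \<chi>' :: "rat \<Rightarrow> 'k"
    and \<phi> :: "('i, 'k) fa \<Rightarrow> ('j, 'k) fa"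
  assumes D: "B_data G I p \<chi>" and D': "B_data G' I' p' \<chi>'"
    and H: "hopf_iso_B G I p \<chi> G' I' p' \<chi>' \<phi>"

sublocale hopf_iso \<subseteq> alg_iso
proof unfold_locales
  show "\<phi> (f + g) = \<phi> f + \<phi> g" for f g using H unfolding hopf_iso_B_def Let_def by blast
  show "\<phi> (single 0 c * f) = single 0 c * \<phi> f" for c f
    using H unfolding hopf_iso_B_def Let_def fa_smult_eq by blast
  show "f \<in> B_ideal G I p \<chi> \<longleftrightarrow> \<phi> f \<in> B_ideal G' I' p' \<chi>'" for f
    using H unfolding hopf_iso_B_def Let_def by blast
  show "\<exists>f. g - \<phi> f \<in> B_ideal G' I' p' \<chi>'" for g using H unfolding hopf_iso_B_def Let_def by blast
  show "\<phi> (f * g) - \<phi> f * \<phi> g \<in> B_ideal G' I' p' \<chi>'" for f g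
    using H unfolding hopf_iso_B_def Let_def fa_mult_eq by blast
  show "\<phi> 1 - 1 \<in> B_ideal G' I' p' \<chi>'" using H unfolding hopf_iso_B_def Let_def fa_one_eq by blast
qed (fact D D')+

context hopf_iso
begin

lemma phi_Delta: "ft_map \<phi> (B_Delta p f) - B_Delta p' (\<phi> f) \<in> ft_ideal R'"
  using H unfolding hopf_iso_B_def Let_def by blast
lemma phi_eps: "B_eps G' (\<phi> f) = B_eps G f" using H unfolding hopf_iso_B_def Let_def by blast

lemma rep_tensor_phi_Delta:
  assumes a: "\<And>r. r \<in> R' \<Longrightarrow> lin_ext \<alpha> r = 0" and b: "\<And>r. r \<in> R' \<Longrightarrow> lin_ext \<beta> r = 0"
  shows "rep_tensor \<alpha> \<beta> (ft_map \<phi> (B_Delta p f)) = rep_tensor \<alpha> \<beta> (B_Delta p' (\<phi> f))"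
  using rep_tensor_ft_ideal[OF phi_Delta[of f] a b] by (simp add: rep_tensor_diff)

lemma lin_ext_rep11_word_R': "r \<in> R' \<Longrightarrow> lin_ext (rep11_word G') r = 0" using rep11_R' by (simp add: rep11_def)
lemma lin_ext_rep12_word_R': "j \<in> I' \<Longrightarrow> r \<in> R' \<Longrightarrow> lin_ext (rep12_word G' p' \<chi>' j) r = 0" using rep12_R' by (simp add: rep12_def)
lemma rep11_phi_X_grouplike: assumes a: "a \<in> G" shows "\<exists>b\<in>G'. rep11 G' (\<phi> (single [GX a] 1)) = single b 1"
proof -
  let ?t = "rep11 G' (\<phi> (single [GX a] 1))"
  have "rep_tensor (rep11_word G') (rep11_word G') (ft_map \<phi> (B_Delta p (single [GX a] 1))) = rep_tensor (rep11_word G') (rep11_word G') (B_Delta p' (\<phi> (single [GX a] 1)))"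
    by (rule rep_tensor_phi_Delta) (simp_all add: lin_ext_rep11_word_R')
  then have bx: "kQ_tensor ?t ?t = kQ_Delta ?t"
    by (simp add: B_Delta_X ft_map_single rep_tensor_scale rep_tensor_ft_tensor rep_tensor_11_11_Delta flip: rep11_def)
  have "kQ_eps ?t = B_eps G' (\<phi> (single [GX a] 1))" by (simp add: B_eps_eq_kQ_eps[OF D'])
  also have "\<dots> = 1" using a by (simp add: phi_eps B_eps_single eps_word_def)
  finally obtain b where b: "?t = single b 1" using kQ_grouplike[OF bx] by blast
  have "b \<in> keys ?t" using b by simp
  then have "b \<in> G'" using keys_rep11[OF D'] by blast
  then show ?thesis using b by blast
qed

text \<open>\<open>\<phi>(x\<^sup>a)\<close> is grouplike, hence \<open>x\<^sup>b\<close> modulo the ideal; \<open>phi_exp a\<close> is this \<open>b\<close>.\<close>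

definition phi_exp :: "rat \<Rightarrow> rat" where
  "phi_exp a = (SOME b. b \<in> G' \<and> rep11 G' (\<phi> (single [GX a] 1)) = single b 1)"

lemma phi_exp_spec: assumes "a \<in> G" shows "phi_exp a \<in> G'" "rep11 G' (\<phi> (single [GX a] 1)) = single (phi_exp a) 1"
proof -
  have "phi_exp a \<in> G' \<and> rep11 G' (\<phi> (single [GX a] 1)) = single (phi_exp a) 1"
    unfolding phi_exp_def by (rule someI_ex) (use rep11_phi_X_grouplike[OF assms] in blast)
  then show "phi_exp a \<in> G'" "rep11 G' (\<phi> (single [GX a] 1)) = single (phi_exp a) 1" by auto
qed

lemma phi_exp_add: assumes a: "a \<in> G" and b: "b \<in> G" shows "phi_exp (a + b) = phi_exp a + phi_exp b"
proof -
  have "rep11 G' (\<phi> (single [GX a] 1 * single [GX b] 1)) = rep11 G' (\<phi> (single [GX (a + b)] 1))"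
    by (rule rep11_phi_cong[OF B_ideal_XX[OF a b]])
  moreover note rep11_phi_mult[of "single [GX a] 1" "single [GX b] 1"]
  ultimately have "single (phi_exp a + phi_exp b) 1 = single (phi_exp (a + b)) (1::'k)"
    by (simp only: phi_exp_spec(2)[OF a] phi_exp_spec(2)[OF b] phi_exp_spec(2)[OF B_data_G_add[OF D a b]] mult_single) simp
  then show ?thesis by (metis single_one_inj)
qed

lemma phi_exp_zero: "phi_exp 0 = 0"
  using phi_exp_add[OF B_data_G_zero[OF D] B_data_G_zero[OF D]] by simp

lemma rep12_phi_X: assumes a: "a \<in> G" and j: "j \<in> I'" shows "rep12 G' p' \<chi>' j (\<phi> (single [GX a] 1)) = 0"
proof -
  let ?t = "rep11 G' (\<phi> (single [GX a] 1))" and ?m = "rep12 G' p' \<chi>' j (\<phi> (single [GX a] 1))"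
  let ?s = "1 / of_nat (p' j) :: rat"
  have sG: "?s \<in> G'" using B_data_inv_p_mem[OF D' j] .
  have "rep_tensor (rep11_word G') (rep12_word G' p' \<chi>' j) (ft_map \<phi> (B_Delta p (single [GX a] 1)))
      = rep_tensor (rep11_word G') (rep12_word G' p' \<chi>' j) (B_Delta p' (\<phi> (single [GX a] 1)))"
    by (rule rep_tensor_phi_Delta) (simp_all add: lin_ext_rep11_word_R' lin_ext_rep12_word_R' j)
  then have e1: "kQ_tensor ?t ?m = kQ_Delta ?m * single (?s, 0) 1"
    by (simp add: B_Delta_X ft_map_single rep_tensor_scale rep_tensor_ft_tensor rep_tensor_11_12_Delta[where p=p' and j=j and G=G', OF sG] flip: rep11_def rep12_def)
  have "rep_tensor (rep12_word G' p' \<chi>' j) (rep11_word G') (ft_map \<phi> (B_Delta p (single [GX a] 1)))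
      = rep_tensor (rep12_word G' p' \<chi>' j) (rep11_word G') (B_Delta p' (\<phi> (single [GX a] 1)))"
    by (rule rep_tensor_phi_Delta) (simp_all add: lin_ext_rep11_word_R' lin_ext_rep12_word_R' j)
  then have e2: "kQ_tensor ?m ?t = kQ_Delta ?m"
    by (simp add: B_Delta_X ft_map_single rep_tensor_scale rep_tensor_ft_tensor rep_tensor_12_11_Delta flip: rep11_def rep12_def)
  have t: "?t = single (phi_exp a) 1" using phi_exp_spec(2)[OF a] .
  show ?thesis
  proof (rule poly_mapping_eqI, rule ccontr)
    fix e assume ne: "lookup ?m e \<noteq> lookup 0 e"
    have "lookup (kQ_tensor ?m ?t) (e, phi_exp a) = lookup (kQ_Delta ?m) (e, phi_exp a)" using e2 by simp
    then have ef: "e = phi_exp a" using ne by (simp add: lookup_kQ_tensor lookup_kQ_Delta t split: if_splits)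
    have "lookup (kQ_tensor ?t ?m) (phi_exp a, e) = lookup (kQ_Delta ?m * single (?s, 0) 1) (phi_exp a, e)" using e1 by simp
    then have "phi_exp a = e + ?s" using ne by (simp add: lookup_kQ_tensor lookup_kQ_Delta_shift t split: if_splits)
    then show False using ef B_data_p_ge_2[OF D' j] by simp
  qed
qed

lemma rep12_phi_Y_comult:
  assumes i: "i \<in> I" and j: "j \<in> I'"
  defines "m \<equiv> rep12 G' p' \<chi>' j (\<phi> (single [GY i] 1))"
  shows "kQ_tensor (single (phi_exp (1 / of_nat (p i))) 1) m = kQ_Delta m * single (1 / of_nat (p' j), 0) 1"
    and "kQ_tensor m 1 = kQ_Delta m"
proof -
  have sG: "1 / of_nat (p' j) \<in> G'" using B_data_inv_p_mem[OF D' j] .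
  have aG: "1 / of_nat (p i) \<in> G" using B_data_inv_p_mem[OF D i] .
  have PY: "rep11 G' (\<phi> (single [GY i] 1)) = 0" using rep11_phi_Y .
  have MX: "rep12 G' p' \<chi>' j (\<phi> (single [GX (1 / of_nat (p i))] 1)) = 0" using rep12_phi_X[OF aG j] .
  have "rep_tensor (rep11_word G') (rep12_word G' p' \<chi>' j) (ft_map \<phi> (B_Delta p (single [GY i] 1)))
      = rep_tensor (rep11_word G') (rep12_word G' p' \<chi>' j) (B_Delta p' (\<phi> (single [GY i] 1)))"
    by (rule rep_tensor_phi_Delta) (simp_all add: lin_ext_rep11_word_R' lin_ext_rep12_word_R' j)
  then show "kQ_tensor (single (phi_exp (1 / of_nat (p i))) 1) m = kQ_Delta m * single (1 / of_nat (p' j), 0) 1"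
    unfolding m_def
    by (simp add: B_Delta_Y ft_map_single ft_map_add rep_tensor_add rep_tensor_scale rep_tensor_ft_tensor
        rep_tensor_11_12_Delta[where p=p' and j=j and G=G', OF sG] PY phi_exp_spec(2)[OF aG] flip: rep11_def rep12_def)
  have "rep_tensor (rep12_word G' p' \<chi>' j) (rep11_word G') (ft_map \<phi> (B_Delta p (single [GY i] 1)))
      = rep_tensor (rep12_word G' p' \<chi>' j) (rep11_word G') (B_Delta p' (\<phi> (single [GY i] 1)))"
    by (rule rep_tensor_phi_Delta) (simp_all add: lin_ext_rep11_word_R' lin_ext_rep12_word_R' j)
  then show "kQ_tensor m 1 = kQ_Delta m"
    unfolding m_def
    by (simp add: B_Delta_Y ft_map_single ft_map_add rep_tensor_add rep_tensor_scale rep_tensor_ft_tensor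
        rep_tensor_12_11_Delta PY MX rep11_phi_one flip: rep11_def rep12_def)
qed

lemma rep12_phi_Y:
  assumes i: "i \<in> I" and j: "j \<in> I'" and m: "rep12 G' p' \<chi>' j (\<phi> (single [GY i] 1)) \<noteq> 0"
  shows "phi_exp (1 / of_nat (p i)) = 1 / of_nat (p' j)"
    and "\<exists>c. c \<noteq> 0 \<and> rep12 G' p' \<chi>' j (\<phi> (single [GY i] 1)) = single 0 c"
proof -
  let ?m = "rep12 G' p' \<chi>' j (\<phi> (single [GY i] 1))"
  let ?s = "1 / of_nat (p' j) :: rat" and ?e = "phi_exp (1 / of_nat (p i))"
  have k0: "e = 0" if e: "lookup ?m e \<noteq> 0" for e
  proof -
    have "lookup (kQ_tensor ?m 1) (e, e) = lookup (kQ_Delta ?m) (e, e)" using rep12_phi_Y_comult(2)[OF i j] by simp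
    then show ?thesis using e by (simp add: lookup_kQ_tensor lookup_kQ_Delta lookup_one when_def split: if_splits)
  qed
  have m0: "lookup ?m 0 \<noteq> 0"
  proof
    assume "lookup ?m 0 = 0"
    then have "?m = 0" by (intro poly_mapping_eqI) (metis k0 lookup_zero)
    then show False using m by simp
  qed
  have "lookup (kQ_tensor (single ?e 1) ?m) (?e, 0) = lookup (kQ_Delta ?m * single (?s, 0) 1) (?e, 0)"
    using rep12_phi_Y_comult(1)[OF i j] by simp
  then show "?e = ?s" using m0 by (simp add: lookup_kQ_tensor lookup_kQ_Delta_shift split: if_splits)
  have "?m = single 0 (lookup ?m 0)"
    by (rule poly_mapping_eqI) (metis k0 lookup_single_eq lookup_single_not_eq)
  then show "\<exists>c. c \<noteq> 0 \<and> ?m = single 0 c" using m0 by blast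
qed

text \<open>Apply \<open>rep12 \<circ> \<phi>\<close> to the relation \<open>x\<^sup>a y\<^sub>i = \<chi>(a/p\<^sub>i) y\<^sub>i x\<^sup>a\<close>.\<close>

lemma chi_phi_exp:
  assumes i: "i \<in> I" and j: "j \<in> I'" and m: "rep12 G' p' \<chi>' j (\<phi> (single [GY i] 1)) \<noteq> 0" and a: "a \<in> G"
  shows "\<chi> (a / of_nat (p i)) = \<chi>' (phi_exp a / of_nat (p' j))"
proof -
  obtain c where c: "c \<noteq> 0" "rep12 G' p' \<chi>' j (\<phi> (single [GY i] 1)) = single 0 c" using rep12_phi_Y(2)[OF i j m] by blast
  let ?k = "\<chi> (a / of_nat (p i))" and ?k' = "\<chi>' (phi_exp a / of_nat (p' j))"
  have faG: "phi_exp a \<in> G'" using phi_exp_spec(1)[OF a] .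
  have k'nz: "?k' \<noteq> 0" using B_data_chi_nonzero[OF D' GM_mem[OF j faG]] .
  have PX: "rep11 G' (\<phi> (single [GX a] 1)) = single (phi_exp a) 1" using phi_exp_spec(2)[OF a] .
  have MX: "rep12 G' p' \<chi>' j (\<phi> (single [GX a] 1)) = 0" using rep12_phi_X[OF a j] .
  have PY: "rep11 G' (\<phi> (single [GY i] 1)) = 0" using rep11_phi_Y .
  have TX: "rep22 G' p' \<chi>' j (\<phi> (single [GX a] 1)) = single (phi_exp a) (inverse ?k')"
    by (simp add: rep22_eq_chi_twist[OF D' j] PX chi_twist_single[OF D'])
  have "rep12 G' p' \<chi>' j (\<phi> (single [GX a] 1 * single [GY i] 1 - single 0 ?k * (single [GY i] 1 * single [GX a] 1))) = 0"
    by (rule rep12_phi_R[OF j B_ideal_XY[OF a i]])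
  then have "rep12 G' p' \<chi>' j (\<phi> (single [GX a] 1 * single [GY i] 1)) - single 0 ?k * rep12 G' p' \<chi>' j (\<phi> (single [GY i] 1 * single [GX a] 1)) = 0"
    by (simp only: phi_diff phi_scale rep12_diff rep12_scale)
  then have "single (phi_exp a) 1 * single 0 c - single 0 ?k * (single 0 c * single (phi_exp a) (inverse ?k')) = (0 :: 'k kQ)"
    by (simp only: rep12_phi_mult[OF j] PX MX PY TX c(2)) simp
  then have "single (phi_exp a) (c - ?k * (c * inverse ?k')) = (0 :: 'k kQ)"
    by (simp add: mult_single single_diff)
  then have "c - ?k * (c * inverse ?k') = 0" by (metis lookup_single_eq lookup_zero)
  then have "c * (1 - ?k * inverse ?k') = 0" by (simp add: algebra_simps)
  then have "?k * inverse ?k' = 1" using c(1) by simp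
  then show ?thesis using k'nz by (simp add: field_simps)
qed

lemma rep11_phi_word:
  "rep11 G' (\<phi> (single w 1)) = 0 \<or> (\<exists>s\<in>G. rep11 G' (\<phi> (single w 1)) = single (phi_exp s) 1)"
proof (induction w)
  case Nil
  have "rep11 G' (\<phi> (single [] 1)) = single (phi_exp 0) 1" by (simp add: rep11_phi_one phi_exp_zero)
  then show ?case using B_data_G_zero[OF D] by blast
next
  case (Cons g w)
  have e: "rep11 G' (\<phi> (single (g # w) 1)) = rep11 G' (\<phi> (single [g] 1)) * rep11 G' (\<phi> (single w 1))"
    by (metis rep11_phi_mult single_Cons_mult)
  consider (X) a where "g = GX a" "a \<in> G" | (Y) i where "g = GY i" "i \<in> I" | (outside) "single [g] (1::'k) \<in> R"
    by (rule letter_cases)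
  then show ?case
  proof cases
    case X
    from Cons show ?thesis
    proof
      assume "\<exists>s\<in>G. rep11 G' (\<phi> (single w 1)) = single (phi_exp s) 1"
      then obtain s where s: "s \<in> G" "rep11 G' (\<phi> (single w 1)) = single (phi_exp s) 1" by blast
      have "rep11 G' (\<phi> (single (g # w) 1)) = single (phi_exp (a + s)) 1"
        using e X phi_exp_spec(2)[OF X(2)] s by (simp add: mult_single phi_exp_add[OF X(2) s(1)])
      then show ?thesis using B_data_G_add[OF D X(2) s(1)] by blast
    qed (use e in simp)
  qed (use e rep11_phi_Y rep11_phi_R in simp_all)
qed

lemma rep12_phi_word_nonzero:
  assumes j: "j \<in> I'"
  shows "rep12 G' p' \<chi>' j (\<phi> (single w 1)) \<noteq> 0 \<Longrightarrow> \<exists>i\<in>I. rep12 G' p' \<chi>' j (\<phi> (single [GY i] 1)) \<noteq> 0"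
proof (induction w)
  case Nil then show ?case by (simp add: rep12_phi_one[OF j])
next
  case (Cons g w)
  have e: "rep12 G' p' \<chi>' j (\<phi> (single (g # w) 1)) = rep11 G' (\<phi> (single [g] 1)) * rep12 G' p' \<chi>' j (\<phi> (single w 1))
      + rep12 G' p' \<chi>' j (\<phi> (single [g] 1)) * rep22 G' p' \<chi>' j (\<phi> (single w 1))"
    by (metis rep12_phi_mult[OF j] single_Cons_mult)
  show ?case
  proof (cases "rep12 G' p' \<chi>' j (\<phi> (single [g] 1)) = 0")
    case True
    then have "rep12 G' p' \<chi>' j (\<phi> (single w 1)) \<noteq> 0" using e Cons.prems by auto
    then show ?thesis by (rule Cons.IH)
  next
    case False
    consider (X) a where "g = GX a" "a \<in> G" | (Y) i where "g = GY i" "i \<in> I" | (outside) "single [g] (1::'k) \<in> R"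
      by (rule letter_cases)
    then show ?thesis
      by cases (use False rep12_phi_X[OF _ j] rep12_phi_R[OF j] in auto)
  qed
qed

lemma G'_subset_phi_exp_image: assumes b: "b \<in> G'" shows "\<exists>a\<in>G. b = phi_exp a"
proof -
  obtain f where f: "single [GX b] 1 - \<phi> f \<in> R'" using phi_surj by blast
  have "rep11 G' (single [GX b] 1 - \<phi> f) = 0" by (rule rep11_R'[OF f])
  then have "single b 1 = rep11 G' (\<phi> f)" using b by (simp add: rep11_diff)
  also have "\<dots> = lin_ext (\<lambda>w. rep11 G' (\<phi> (single w 1))) f"
    by (subst phi_expand) (simp add: rep11_def lin_ext_compose)
  finally have e: "single b 1 = lin_ext (\<lambda>w. rep11 G' (\<phi> (single w 1))) f" .
  have "keys (lin_ext (\<lambda>w. rep11 G' (\<phi> (single w 1))) f) \<subseteq> phi_exp ` G"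
  proof (rule keys_lin_ext_subset)
    fix w
    from rep11_phi_word[of w] show "keys (rep11 G' (\<phi> (single w 1))) \<subseteq> phi_exp ` G" by auto
  qed
  then have "b \<in> phi_exp ` G" using e[symmetric] by simp
  then show ?thesis by blast
qed

lemma rep12_phi_Y_surj: assumes j: "j \<in> I'" shows "\<exists>i\<in>I. rep12 G' p' \<chi>' j (\<phi> (single [GY i] 1)) \<noteq> 0"
proof -
  obtain f where f: "single [GY j] 1 - \<phi> f \<in> R'" using phi_surj by blast
  have "rep12 G' p' \<chi>' j (single [GY j] 1 - \<phi> f) = 0" by (rule rep12_R'[OF f j])
  then have "1 = rep12 G' p' \<chi>' j (\<phi> f)" by (simp add: rep12_diff)
  also have "\<dots> = lin_ext (\<lambda>w. rep12 G' p' \<chi>' j (\<phi> (single w 1))) f"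
    by (subst phi_expand) (simp add: rep12_def lin_ext_compose)
  finally have e: "lin_ext (\<lambda>w. rep12 G' p' \<chi>' j (\<phi> (single w 1))) f \<noteq> 0" by (metis one_neq_zero)
  then obtain w where "rep12 G' p' \<chi>' j (\<phi> (single w 1)) \<noteq> 0" using lin_ext_zero_fun by metis
  then show ?thesis by (rule rep12_phi_word_nonzero[OF j])
qed

lemma phi_exp_linear: "a \<in> G \<Longrightarrow> phi_exp a = a * phi_exp 1"
  by (rule additive_on_rat_linear[where G = G])
    (use B_data_G_add[OF D] B_data_G_of_int[OF D, of 1] phi_exp_add in auto)

text \<open>Otherwise \<open>\<phi>(y\<^sub>i)\<close> lies in \<open>Y2_span + R'\<close>, which \<open>phi_inv\<close> maps into the kernel of
  \<open>rep12 \<circ> phi_inv\<close>; but \<open>phi_inv (\<phi> y\<^sub>i) \<equiv> y\<^sub>i\<close> and \<open>rep12 y\<^sub>i = 1\<close>.\<close>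

lemma rep12_phi_Y_total:
  assumes i: "i \<in> I"
  shows "\<exists>j\<in>I'. rep12 G' p' \<chi>' j (\<phi> (single [GY i] 1)) \<noteq> 0"
proof (rule ccontr)
  interpret inv: alg_iso G' I' p' \<chi>' G I p \<chi> phi_inv by (rule alg_iso_phi_inv)
  assume "\<not> ?thesis"
  then obtain t r where tr: "t \<in> Y2_span" "r \<in> R'" "\<phi> (single [GY i] 1) = t + r"
    using reps_kernel_decomp[OF D' rep11_phi_Y] by blast
  have "rep12 G p \<chi> i (phi_inv (\<phi> (single [GY i] 1))) = 1"
    using inv.rep12_R'[OF phi_inv_phi i] by (simp add: rep12_diff)
  moreover have "rep12 G p \<chi> i (phi_inv r) = 0" using inv.rep12_R'[OF inv.phi_R[OF tr(2)] i] .
  moreover have "rep12 G p \<chi> i (phi_inv t) = 0"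
  proof -
    have "rep12 G p \<chi> i (phi_inv t) = lin_ext (\<lambda>w. rep12 G p \<chi> i (phi_inv (single w 1))) t"
      by (subst inv.phi_expand) (simp add: rep12_def lin_ext_compose)
    also have "\<dots> = 0"
      by (rule lin_ext_zero_fun) (use tr(1) inv.reps_phi_word[OF i] in \<open>auto simp: Y2_span_def\<close>)
    finally show ?thesis .
  qed
  ultimately show False using tr(3) by (simp add: phi_inv_add rep12_add)
qed

text \<open>Each \<open>j\<close> gives \<open>phi_exp 1 = p\<^sub>i / p'\<^sub>j\<close> for some \<open>i\<close>; with two values of \<open>j\<close>,
  coprimality forces \<open>p\<^sub>i = p'\<^sub>j\<close>.\<close>

lemma phi_exp_one: "phi_exp 1 = 1"
proof -
  obtain j1 j2 where j: "j1 \<in> I'" "j2 \<in> I'" "j1 \<noteq> j2" using B_data_two_indices[OF D'] by blast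
  obtain i1 where i1: "i1 \<in> I" "rep12 G' p' \<chi>' j1 (\<phi> (single [GY i1] 1)) \<noteq> 0" using rep12_phi_Y_surj[OF j(1)] by blast
  obtain i2 where i2: "i2 \<in> I" "rep12 G' p' \<chi>' j2 (\<phi> (single [GY i2] 1)) \<noteq> 0" using rep12_phi_Y_surj[OF j(2)] by blast
  have f1: "phi_exp (1 / of_nat (p i1)) = 1 / of_nat (p' j1)" by (rule rep12_phi_Y(1)[OF i1(1) j(1) i1(2)])
  have f2: "phi_exp (1 / of_nat (p i2)) = 1 / of_nat (p' j2)" by (rule rep12_phi_Y(1)[OF i2(1) j(2) i2(2)])
  have p1: "p i1 \<ge> 2" "p i2 \<ge> 2" "p' j1 \<ge> 2" "p' j2 \<ge> 2"
    using B_data_p_ge_2[OF D i1(1)] B_data_p_ge_2[OF D i2(1)] B_data_p_ge_2[OF D' j(1)] B_data_p_ge_2[OF D' j(2)] by auto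
  have r1: "phi_exp 1 = of_nat (p i1) / of_nat (p' j1)"
    using f1 phi_exp_linear[OF B_data_inv_p_mem[OF D i1(1)]] p1 by (simp add: field_simps)
  have r2: "phi_exp 1 = of_nat (p i2) / of_nat (p' j2)"
    using f2 phi_exp_linear[OF B_data_inv_p_mem[OF D i2(1)]] p1 by (simp add: field_simps)
  have cq: "coprime (p' j1) (p' j2)" using B_data_p_coprime[OF D' j] .
  have ii: "i1 \<noteq> i2"
  proof
    assume "i1 = i2"
    then have "p' j1 = p' j2" using r1 r2 p1 by (simp add: field_simps)
    then show False using cq p1 by simp
  qed
  have cp: "coprime (p i1) (p i2)" using B_data_p_coprime[OF D i1(1) i2(1) ii] .
  have "(of_nat (p i1 * p' j2) :: rat) = of_nat (p i2 * p' j1)"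
    using r1 r2 p1 by (simp add: field_simps)
  then have "p i1 * p' j2 = p i2 * p' j1" by (simp only: of_nat_eq_iff)
  then have "p i1 = p' j1" using coprime_cross_mult_eq[OF cp cq] by blast
  then show ?thesis using r1 p1 by simp
qed

lemma phi_exp_id: "a \<in> G \<Longrightarrow> phi_exp a = a"
  using phi_exp_linear phi_exp_one by simp

lemma G_eq: "G = G'"
proof
  show "G \<subseteq> G'" using phi_exp_spec(1) phi_exp_id by force
  show "G' \<subseteq> G" using G'_subset_phi_exp_image phi_exp_id by force
qed

lemma p_eq_of_rep12_phi_Y:
  assumes i: "i \<in> I" and "j \<in> I'" and "rep12 G' p' \<chi>' j (\<phi> (single [GY i] 1)) \<noteq> 0"
  shows "p i = p' j"
  using rep12_phi_Y(1)[OF assms] phi_exp_id[OF B_data_inv_p_mem[OF D i]] by simp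

lemma p_image_eq: "p ` I = p' ` I'"
proof
  show "p ` I \<subseteq> p' ` I'"
  proof (rule image_subsetI)
    fix i assume i: "i \<in> I"
    then obtain j where "j \<in> I'" "rep12 G' p' \<chi>' j (\<phi> (single [GY i] 1)) \<noteq> 0"
      using rep12_phi_Y_total by blast
    then show "p i \<in> p' ` I'" using p_eq_of_rep12_phi_Y[OF i] by (metis image_eqI)
  qed
  show "p' ` I' \<subseteq> p ` I"
  proof (rule image_subsetI)
    fix j assume j: "j \<in> I'"
    then obtain i where "i \<in> I" "rep12 G' p' \<chi>' j (\<phi> (single [GY i] 1)) \<noteq> 0"
      using rep12_phi_Y_surj by blast
    then show "p' j \<in> p ` I" using p_eq_of_rep12_phi_Y[OF _ j] by (metis image_eqI)
  qed
qed

lemma chi_eq_on_generators: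
  assumes i: "i \<in> I" and a: "a \<in> G"
  shows "\<chi> (a / of_nat (p i)) = \<chi>' (a / of_nat (p i))"
proof -
  obtain j where j: "j \<in> I'" "rep12 G' p' \<chi>' j (\<phi> (single [GY i] 1)) \<noteq> 0"
    using rep12_phi_Y_total[OF i] by blast
  then show ?thesis using chi_phi_exp[OF i j a] phi_exp_id[OF a] p_eq_of_rep12_phi_Y[OF i j] by simp
qed

lemma hopf_iso_data_eq: "G = G' \<and> p ` I = p' ` I' \<and> (\<forall>q\<in>GM G I p. \<chi> q = \<chi>' q)"
  using G_eq p_image_eq chi_eq_on_GM_of_generators[OF D D'] chi_eq_on_generators by auto

end

section \<open>Relabelling isomorphisms\<close>

fun relabel_letter :: "('i \<Rightarrow> 'j) \<Rightarrow> 'i gen \<Rightarrow> 'j gen" where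
  "relabel_letter \<sigma> (GX a) = GX a" | "relabel_letter \<sigma> (GY i) = GY (\<sigma> i)"

fun relabel_gen :: "'i set \<Rightarrow> ('i \<Rightarrow> 'j) \<Rightarrow> 'i gen \<Rightarrow> ('j, 'k::comm_ring_1) fa" where
  "relabel_gen I \<sigma> (GX a) = single [GX a] 1"
| "relabel_gen I \<sigma> (GY i) = (if i \<in> I then single [GY (\<sigma> i)] 1 else 0)"

definition relabel_word :: "'i set \<Rightarrow> ('i \<Rightarrow> 'j) \<Rightarrow> 'i gen list \<Rightarrow> ('j, 'k::comm_ring_1) fa" where
  "relabel_word I \<sigma> = word_prod (relabel_gen I \<sigma>)"

definition relabel :: "'i set \<Rightarrow> ('i \<Rightarrow> 'j) \<Rightarrow> ('i, 'k::comm_ring_1) fa \<Rightarrow> ('j, 'k) fa" where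
  "relabel I \<sigma> = lin_ext (relabel_word I \<sigma>)"

lemma relabel_word_eq: "relabel_word I \<sigma> w = (if valid_word I w then single (map (relabel_letter \<sigma>) w) 1 else 0)"
proof (induction w)
  case Nil then show ?case by (simp add: relabel_word_def)
next
  case (Cons g w)
  then show ?case by (cases g) (auto simp: relabel_word_def mult_single)
qed

lemma relabel_word_append: "relabel_word I \<sigma> (u @ v) = relabel_word I \<sigma> u * relabel_word I \<sigma> v"
  by (simp add: relabel_word_def word_prod_append)

lemma relabel_mult: "relabel I \<sigma> (f * g) = relabel I \<sigma> f * relabel I \<sigma> g"
  unfolding relabel_def by (rule lin_ext_mult) (simp add: relabel_word_append)
lemma relabel_add: "relabel I \<sigma> (f + g) = relabel I \<sigma> f + relabel I \<sigma> g" by (simp add: relabel_def lin_ext_add)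
lemma relabel_diff: "relabel I \<sigma> (f - g) = relabel I \<sigma> f - relabel I \<sigma> g" by (simp add: relabel_def lin_ext_diff)
lemma relabel_scale: "relabel I \<sigma> (single 0 c * f) = single 0 c * relabel I \<sigma> f" by (simp add: relabel_def lin_ext_scale)
lemma relabel_single: "relabel I \<sigma> (single w c) = single 0 c * relabel_word I \<sigma> w" by (simp add: relabel_def)
lemma relabel_one: "relabel I \<sigma> 1 = 1"
proof -
  have "relabel I \<sigma> (single [] 1) = 1" by (simp only: relabel_single) (simp add: relabel_word_def)
  then show ?thesis by simp
qed
lemma relabel_zero: "relabel I \<sigma> 0 = 0" by (simp add: relabel_def)
lemma relabel_uminus: "relabel I \<sigma> (- f) = - relabel I \<sigma> f" by (simp add: relabel_def lin_ext_uminus)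

lemma relabel_X: "relabel I \<sigma> (single [GX a] 1) = single [GX a] 1"
  by (simp add: relabel_single relabel_word_eq)
lemma relabel_Y: "relabel I \<sigma> (single [GY i] 1) = (if i \<in> I then single [GY (\<sigma> i)] 1 else 0)"
  by (simp add: relabel_single relabel_word_eq)

lemma relabel_single_one: "relabel I \<sigma> (single w 1) = relabel_word I \<sigma> w"
  by (simp add: relabel_single)

lemma ft_map_relabel_mult:
  fixes I :: "'i set" and \<sigma> :: "'i \<Rightarrow> 'j" and A B :: "('i,'k::comm_ring_1) ft"
  shows "ft_map (relabel I \<sigma>) (A * B) = ft_map (relabel I \<sigma>) A * ft_map (relabel I \<sigma>) B"
proof -
  have L: "ft_map (relabel I \<sigma>) = lin_ext (\<lambda>uv. tensor_left (relabel_word I \<sigma> (fst uv)) * tensor_right (relabel_word I \<sigma> (snd uv)))"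
    by (simp add: ft_map_eq ft_tensor_eq relabel_single_one)
  have M: "tensor_left (relabel_word I \<sigma> (fst (x + y))) * tensor_right (relabel_word I \<sigma> (snd (x + y)))
     = tensor_left (relabel_word I \<sigma> (fst x)) * tensor_right (relabel_word I \<sigma> (snd x)) * (tensor_left (relabel_word I \<sigma> (fst y)) * tensor_right (relabel_word I \<sigma> (snd y)))"
    for x y :: "'i gen list \<times> 'i gen list"
  proof -
    have "tensor_left (relabel_word I \<sigma> (fst (x + y))) * tensor_right (relabel_word I \<sigma> (snd (x + y)))
      = tensor_left (relabel_word I \<sigma> (fst x)) * (tensor_left (relabel_word I \<sigma> (fst y)) * tensor_right (relabel_word I \<sigma> (snd x))) * tensor_right (relabel_word I \<sigma> (snd y))"
      by (simp add: relabel_word_append tensor_left_mult tensor_right_mult mult.assoc)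
    also have "\<dots> = tensor_left (relabel_word I \<sigma> (fst x)) * (tensor_right (relabel_word I \<sigma> (snd x)) * tensor_left (relabel_word I \<sigma> (fst y))) * tensor_right (relabel_word I \<sigma> (snd y))"
      by (simp only: tensor_left_right_commute)
    finally show ?thesis by (simp add: mult.assoc)
  qed
  show ?thesis unfolding L by (rule lin_ext_mult) (rule M)
qed

lemma ft_map_relabel_one: "ft_map (relabel I \<sigma>) 1 = (1 :: ('j,'k::comm_ring_1) ft)"
proof -
  have "ft_map (relabel I \<sigma>) (single ([], []) 1) = (1 :: ('j,'k) ft)"
    by (simp only: ft_map_single) (simp add: relabel_one ft_tensor_one)
  then show ?thesis by simp
qed

lemma relabel_single_zero: "relabel I \<sigma> (single 0 c) = (single 0 c :: ('j,'k::comm_ring_1) fa)"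
proof -
  have "relabel I \<sigma> (single [] c) = (single 0 c :: ('j,'k) fa)" by (simp only: relabel_single) (simp add: relabel_word_def)
  then show ?thesis by simp
qed

lemma eps_gen_relabel_letter: "eps_gen G (relabel_letter \<sigma> g) = eps_gen G g" by (cases g) auto

locale relabelling =
  fixes G :: "rat set" and I :: "'i set" and p :: "'i \<Rightarrow> nat" and \<chi> :: "rat \<Rightarrow> 'k::field"
    and G' :: "rat set" and I' :: "'j set" and p' :: "'j \<Rightarrow> nat" and \<chi>' :: "rat \<Rightarrow> 'k"
    and \<sigma> :: "'i \<Rightarrow> 'j"
  assumes D: "B_data G I p \<chi>" and D': "B_data G' I' p' \<chi>'" and GG: "G' = G"
    and sig: "\<And>i. i \<in> I \<Longrightarrow> \<sigma> i \<in> I' \<and> p' (\<sigma> i) = p i"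
    and chi: "\<And>i a. i \<in> I \<Longrightarrow> a \<in> G \<Longrightarrow> \<chi>' (a / of_nat (p i)) = \<chi> (a / of_nat (p i))"
begin

abbreviation "R \<equiv> B_ideal G I p \<chi>"
abbreviation "R' \<equiv> B_ideal G' I' p' \<chi>'"
abbreviation "\<phi> \<equiv> (relabel I \<sigma> :: ('i,'k) fa \<Rightarrow> ('j,'k) fa)"

lemma relabel_B_rels: assumes r: "r \<in> B_rels G I p \<chi>" shows "\<phi> r \<in> R'"
  using r
proof (cases rule: B_rels_cases)
  case X0
  then show ?thesis using B_ideal_X0[where G=G' and I=I' and p=p' and \<chi>=\<chi>'] by (simp add: relabel_diff relabel_X relabel_one)
next
  case (XX a b)
  then show ?thesis using B_ideal_XX[where G=G' and I=I' and p=p' and \<chi>=\<chi>' and a=a and b=b] GG by (simp add: relabel_diff relabel_mult relabel_X)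
next
  case (XY a i)
  then show ?thesis using B_ideal_XY[where G=G' and I=I' and p=p' and \<chi>=\<chi>' and a=a and i="\<sigma> i"] GG sig[OF XY(2)] chi[OF XY(2,1)]
    by (simp add: relabel_diff relabel_mult relabel_X relabel_Y relabel_scale relabel_single_zero)
next
  case (YY i k)
  then show ?thesis using B_ideal_Y_commute[where G=G' and I=I' and p=p' and \<chi>=\<chi>' and i="\<sigma> i" and j="\<sigma> k"] sig
    by (simp add: relabel_diff relabel_mult relabel_Y)
next
  case (Y_power i k)
  have "valid_word I (replicate n (GY i))" "valid_word I (replicate n (GY k))" for n
    using Y_power by (auto simp: valid_word_def)
  then show ?thesis using Y_power B_ideal_Y_power[where G=G' and I=I' and p=p' and \<chi>=\<chi>' and i="\<sigma> i" and j="\<sigma> k"] sig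
    by (simp add: relabel_diff relabel_single_one relabel_word_eq)
next
  case (X_outside a)
  then show ?thesis using B_ideal_X_outside[where G=G' and I=I' and p=p' and \<chi>=\<chi>' and a=a] GG by (simp add: relabel_X)
next
  case (Y_outside i)
  then show ?thesis by (simp add: relabel_Y B_ideal_def fa_ideal.zero)
qed

lemma relabel_B_ideal: "r \<in> R \<Longrightarrow> \<phi> r \<in> R'"
  unfolding B_ideal_def
proof (rule fa_ideal_induct_hom[where h = \<phi>])
  fix s assume "s \<in> B_rels G I p \<chi>"
  then show "\<phi> s \<in> fa_ideal (B_rels G' I' p' \<chi>')" using relabel_B_rels unfolding B_ideal_def by blast
qed (simp_all add: relabel_zero relabel_add relabel_mult)

lemma relabel_eps: "B_eps G' (\<phi> f) = B_eps G f"
proof -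
  have w: "lin_ext (\<lambda>w'. single (0::rat) (eps_word G' w')) (relabel_word I \<sigma> w :: ('j,'k) fa) = single 0 (eps_word G w)" for w :: "'i gen list"
  proof (cases "valid_word I w")
    case True
    have "eps_word G' (map (relabel_letter \<sigma>) w) = (eps_word G w :: 'k)"
      unfolding eps_word_def GG by (simp add: comp_def eps_gen_relabel_letter)
    then show ?thesis using True by (simp add: relabel_word_eq)
  next
    case False
    then obtain i where "GY i \<in> set w" by (auto simp: valid_word_def)
    then have "eps_word G w = (0::'k)" unfolding eps_word_def by (induction w) auto
    then show ?thesis using False by (simp add: relabel_word_eq)
  qed
  have "lin_ext (\<lambda>w'. single (0::rat) (eps_word G' w')) (\<phi> f) = lin_ext (\<lambda>w. single 0 (eps_word G w)) f"
    unfolding relabel_def lin_ext_compose by (rule lin_ext_cong) (rule w)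
  then show ?thesis by (simp add: B_eps_eq)
qed

lemma relabel_delta_word: "ft_map \<phi> (delta_word p w) = B_Delta p' (relabel_word I \<sigma> w)"
proof (induction w)
  case Nil
  show ?case by (simp add: ft_map_relabel_one relabel_word_def B_Delta_one)
next
  case (Cons g w)
  have g: "ft_map \<phi> (delta_gen p g) = B_Delta p' (relabel_gen I \<sigma> g)"
  proof (cases g)
    case (GX a)
    then show ?thesis by (simp add: ft_map_single ft_tensor_single relabel_X B_Delta_X)
  next
    case (GY i)
    show ?thesis
    proof (cases "i \<in> I")
      case True
      have "1 / of_nat (p' (\<sigma> i)) = (1 / of_nat (p i) :: rat)" using sig[OF True] by simp
      then show ?thesis using GY True
        by (simp add: ft_map_single ft_map_add ft_tensor_single relabel_X relabel_Y relabel_single_zero relabel_one B_Delta_Y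
            ft_tensor_one_right)
    next
      case False
      then show ?thesis using GY
        by (simp add: ft_map_single ft_map_add relabel_Y ft_tensor_zero B_Delta_eq)
    qed
  qed
  have "ft_map \<phi> (delta_word p (g # w)) = ft_map \<phi> (delta_gen p g) * ft_map \<phi> (delta_word p w)"
    by (simp add: ft_map_relabel_mult)
  also have "\<dots> = B_Delta p' (relabel_gen I \<sigma> g * relabel_word I \<sigma> w)" by (simp add: g Cons B_Delta_mult)
  finally show ?case by (simp add: relabel_word_def)
qed

lemma relabel_Delta: "ft_map \<phi> (B_Delta p f) = B_Delta p' (\<phi> f)"
proof -
  have "ft_map \<phi> (B_Delta p f) = lin_ext (\<lambda>w. ft_map \<phi> (delta_word p w)) f"
    by (simp add: B_Delta_eq ft_map_eq lin_ext_compose)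
  also have "\<dots> = lin_ext (\<lambda>w. B_Delta p' (relabel_word I \<sigma> w)) f" by (simp add: relabel_delta_word)
  also have "\<dots> = B_Delta p' (\<phi> f)" by (simp add: B_Delta_eq relabel_def lin_ext_compose)
  finally show ?thesis .
qed

lemma relabel_S_word: "\<phi> (S_word p w) = B_S p' (relabel_word I \<sigma> w)"
proof (induction w)
  case Nil
  show ?case by (simp add: relabel_one relabel_word_def B_S_one)
next
  case (Cons g w)
  have g: "\<phi> (S_gen p g) = B_S p' (relabel_gen I \<sigma> g)"
  proof (cases g)
    case (GX a)
    then show ?thesis by (simp add: fa_X_def relabel_X B_S_eq)
  next
    case (GY i)
    show ?thesis
    proof (cases "i \<in> I")
      case True
      have "1 / of_nat (p' (\<sigma> i)) = (1 / of_nat (p i) :: rat)" using sig[OF True] by simp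
      then show ?thesis using GY True
        by (simp add: fa_X_def fa_Y_def relabel_uminus relabel_mult relabel_X relabel_Y B_S_eq)
    next
      case False
      then show ?thesis using GY by (simp add: fa_Y_def relabel_uminus relabel_mult relabel_Y B_S_eq)
    qed
  qed
  have "\<phi> (S_word p (g # w)) = \<phi> (S_word p w) * \<phi> (S_gen p g)" by (simp add: relabel_mult)
  also have "\<dots> = B_S p' (relabel_gen I \<sigma> g * relabel_word I \<sigma> w)" by (simp add: g Cons B_S_antimult)
  finally show ?case by (simp add: relabel_word_def)
qed

lemma relabel_S: "\<phi> (B_S p f) = B_S p' (\<phi> f)"
proof -
  have "\<phi> (B_S p f) = lin_ext (\<lambda>w. \<phi> (S_word p w)) f"
    by (simp add: B_S_eq relabel_def lin_ext_compose)
  also have "\<dots> = lin_ext (\<lambda>w. B_S p' (relabel_word I \<sigma> w)) f" by (simp add: relabel_S_word)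
  also have "\<dots> = B_S p' (\<phi> f)" by (simp add: B_S_eq relabel_def lin_ext_compose)
  finally show ?thesis .
qed

end

lemma relabel_relabel_word:
  assumes "valid_word I w" and \<sigma>: "\<And>i. i \<in> I \<Longrightarrow> \<sigma> i \<in> I'" and inv: "\<And>i. i \<in> I \<Longrightarrow> \<sigma>' (\<sigma> i) = i"
  shows "relabel I' \<sigma>' (relabel_word I \<sigma> w) = (single w 1 :: ('i,'k::comm_ring_1) fa)"
  using assms(1)
proof (induction w)
  case Nil
  then show ?case by (simp add: relabel_word_def relabel_one)
next
  case (Cons g w)
  have "relabel I' \<sigma>' (relabel_gen I \<sigma> g) = (single [g] 1 :: ('i,'k) fa)"
    using Cons.prems \<sigma> inv by (cases g) (simp_all add: relabel_X relabel_Y)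
  moreover have "valid_word I w" using Cons.prems by (cases g) simp_all
  ultimately show ?case using Cons.IH by (simp add: relabel_word_def relabel_mult single_Cons_mult[of g w])
qed

lemma relabel_relabel_inverse:
  fixes \<chi> :: "rat \<Rightarrow> 'k::field" and \<sigma> :: "'i \<Rightarrow> 'j" and f :: "('i,'k) fa"
  assumes r: "relabelling G I p \<chi> G' I' p' \<chi>' \<sigma>" and inv: "\<And>i. i \<in> I \<Longrightarrow> \<sigma>' (\<sigma> i) = i"
  shows "f - relabel I' \<sigma>' (relabel I \<sigma> f) \<in> B_ideal G I p \<chi>"
proof -
  have w: "(single w 1 :: ('i,'k) fa) - relabel I' \<sigma>' (relabel_word I \<sigma> w) \<in> B_ideal G I p \<chi>" for w
  proof (cases "valid_word I w")
    case True
    have "relabel I' \<sigma>' (relabel_word I \<sigma> w) = (single w 1 :: ('i,'k) fa)"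
      by (rule relabel_relabel_word[OF True]) (use relabelling.sig[OF r] inv in auto)
    then show ?thesis by (simp add: B_ideal_def fa_ideal.zero)
  next
    case False
    then show ?thesis
      using invalid_word_B_ideal[OF False] by (simp add: relabel_word_eq relabel_zero)
  qed
  have "f - relabel I' \<sigma>' (relabel I \<sigma> f) = lin_ext (\<lambda>w. single w 1 - relabel I' \<sigma>' (relabel_word I \<sigma> w)) f"
    by (simp only: relabel_def lin_ext_compose lin_ext_diff_fun[symmetric] lin_ext_single_id)
  also have "\<dots> \<in> B_ideal G I p \<chi>"
    unfolding B_ideal_def by (rule fa_ideal_lin_ext) (use w in \<open>simp add: B_ideal_def\<close>)
  finally show ?thesis .
qed

lemma relabelling_hopf_iso:
  fixes \<chi> :: "rat \<Rightarrow> 'k::field" and \<sigma> :: "'i \<Rightarrow> 'j"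
  assumes r: "relabelling G I p \<chi> G' I' p' \<chi>' \<sigma>" and r': "relabelling G' I' p' \<chi>' G I p \<chi> \<sigma>'"
    and inv: "\<And>i. i \<in> I \<Longrightarrow> \<sigma>' (\<sigma> i) = i" and inv': "\<And>j. j \<in> I' \<Longrightarrow> \<sigma> (\<sigma>' j) = j"
  shows "hopf_iso_B G I p \<chi> G' I' p' \<chi>' (relabel I \<sigma>)"
proof -
  let ?\<phi> = "relabel I \<sigma> :: ('i,'k) fa \<Rightarrow> ('j,'k) fa"
  let ?\<psi> = "relabel I' \<sigma>' :: ('j,'k) fa \<Rightarrow> ('i,'k) fa"
  have left: "f - ?\<psi> (?\<phi> f) \<in> B_ideal G I p \<chi>" for f by (rule relabel_relabel_inverse[OF r inv])
  have right: "g - ?\<phi> (?\<psi> g) \<in> B_ideal G' I' p' \<chi>'" for g by (rule relabel_relabel_inverse[OF r' inv'])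
  have ideal_iff: "f \<in> B_ideal G I p \<chi> \<longleftrightarrow> ?\<phi> f \<in> B_ideal G' I' p' \<chi>'" for f
  proof
    assume "?\<phi> f \<in> B_ideal G' I' p' \<chi>'"
    then have "?\<psi> (?\<phi> f) \<in> B_ideal G I p \<chi>" by (rule relabelling.relabel_B_ideal[OF r'])
    then have "(f - ?\<psi> (?\<phi> f)) + ?\<psi> (?\<phi> f) \<in> B_ideal G I p \<chi>"
      using left unfolding B_ideal_def by (rule fa_ideal.add[rotated])
    then show "f \<in> B_ideal G I p \<chi>" by simp
  qed (rule relabelling.relabel_B_ideal[OF r])
  show ?thesis
    unfolding hopf_iso_B_def Let_def
    using ideal_iff right
    by (auto simp: relabel_add relabel_single_zero relabel_mult relabel_one B_ideal_def fa_ideal.zero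
        ft_ideal.zero relabelling.relabel_Delta[OF r] relabelling.relabel_eps[OF r] relabelling.relabel_S[OF r])
qed

lemma relabelling_the_inv_into:
  assumes D: "B_data G I p \<chi>" and D': "B_data G' I' p' \<chi>'" and G: "G' = G"
    and p: "p ` I \<subseteq> p' ` I'"
    and chi: "\<And>i a. i \<in> I \<Longrightarrow> a \<in> G \<Longrightarrow> \<chi>' (a / of_nat (p i)) = \<chi> (a / of_nat (p i))"
  shows "relabelling G I p \<chi> G' I' p' \<chi>' (the_inv_into I' p' \<circ> p)"
proof
  fix i assume "i \<in> I"
  then have "p i \<in> p' ` I'" using p by blast
  then show "(the_inv_into I' p' \<circ> p) i \<in> I' \<and> p' ((the_inv_into I' p' \<circ> p) i) = p i"
    using B_data_inj_on_p[OF D'] by (simp add: the_inv_into_into f_the_inv_into_f)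
qed (fact D D' G chi)+

lemma data_eq_imp_hopf_iso:
  assumes D: "B_data G I p \<chi>" and D': "B_data G' I' p' \<chi>'"
    and G: "G = G'" and p: "p ` I = p' ` I'" and chi: "\<forall>q\<in>GM G I p. \<chi> q = \<chi>' q"
  shows "hopf_iso_B G I p \<chi> G' I' p' \<chi>' (relabel I (the_inv_into I' p' \<circ> p))"
proof (rule relabelling_hopf_iso)
  have chi_gen: "\<chi> (a / of_nat (p i)) = \<chi>' (a / of_nat (p i))" if "i \<in> I" "a \<in> G" for i a
    using chi GM_mem[OF that] by blast
  show "relabelling G I p \<chi> G' I' p' \<chi>' (the_inv_into I' p' \<circ> p)"
    by (rule relabelling_the_inv_into) (use D D' G p chi_gen in auto)
  show "relabelling G' I' p' \<chi>' G I p \<chi> (the_inv_into I p \<circ> p')"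
  proof (rule relabelling_the_inv_into)
    fix j a assume "j \<in> I'" "a \<in> G'"
    then obtain i where "i \<in> I" "p' j = p i" "a \<in> G" using p G by (metis imageE imageI)
    then show "\<chi> (a / of_nat (p' j)) = \<chi>' (a / of_nat (p' j))" using chi_gen by simp
  qed (use D D' G p in auto)
  show "(the_inv_into I p \<circ> p') ((the_inv_into I' p' \<circ> p) i) = i" if "i \<in> I" for i
  proof -
    have "p i \<in> p' ` I'" using that p by blast
    then have "p' (the_inv_into I' p' (p i)) = p i" by (rule f_the_inv_into_f[OF B_data_inj_on_p[OF D']])
    then show ?thesis using that B_data_inj_on_p[OF D] by (simp add: the_inv_into_f_f)
  qed
  show "(the_inv_into I' p' \<circ> p) ((the_inv_into I p \<circ> p') j) = j" if "j \<in> I'" for j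
  proof -
    have "p' j \<in> p ` I" using that p by blast
    then have "p (the_inv_into I p (p' j)) = p' j" by (rule f_the_inv_into_f[OF B_data_inj_on_p[OF D]])
    then show ?thesis using that B_data_inj_on_p[OF D'] by (simp add: the_inv_into_f_f)
  qed
qed

theorem proposition2p5:
  fixes G G' :: "rat set" and I :: "'i set" and I' :: "'j set"
    and p :: "'i \<Rightarrow> nat" and p' :: "'j \<Rightarrow> nat"
    and \<chi> \<chi>' :: "rat \<Rightarrow> 'k::field_char_0"
  assumes "alg_closed TYPE('k)"
    and "B_data G I p \<chi>"
    and "B_data G' I' p' \<chi>'"
  shows "(\<exists>\<phi>. hopf_iso_B G I p \<chi> G' I' p' \<chi>' \<phi>) \<longleftrightarrow>
           (G = G' \<and> p ` I = p' ` I' \<and> (\<forall>q\<in>GM G I p. \<chi> q = \<chi>' q))"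
proof
  assume "\<exists>\<phi>. hopf_iso_B G I p \<chi> G' I' p' \<chi>' \<phi>"
  then obtain \<phi> where "hopf_iso_B G I p \<chi> G' I' p' \<chi>' \<phi>" by blast
  then interpret hopf_iso G I p \<chi> G' I' p' \<chi>' \<phi> using assms by unfold_locales
  show "G = G' \<and> p ` I = p' ` I' \<and> (\<forall>q\<in>GM G I p. \<chi> q = \<chi>' q)" by (rule hopf_iso_data_eq)
next
  assume "G = G' \<and> p ` I = p' ` I' \<and> (\<forall>q\<in>GM G I p. \<chi> q = \<chi>' q)"
  then show "\<exists>\<phi>. hopf_iso_B G I p \<chi> G' I' p' \<chi>' \<phi>"
    using data_eq_imp_hopf_iso[OF assms(2,3)] by blast
qed

end
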